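(* Fix $\upsilon \in (0,1]$. Then the limit $\lim_{p\to\infty,\ p \text{ prime}} \rho(\upsilon,p)$ exists.
   Context: For an integer $N\ge 2$ and $f:\mathbb{Z}_N\to\mathbb{C}$ (where $\mathbb{Z}_N=\mathbb{Z}/N\mathbb{Z}$), define $\mathbb{E}(f)=\frac1N\sum_{n\in\mathbb{Z}_N} f(n)$ and $\Lambda_3(f)=\Lambda_3(f;N)=\frac{1}{N^2}\sum_{n,d\in\mathbb{Z}_N} f(n)f(n+d)f(n+2d)$. For $\upsilon\in(0,1]$ let $\mathcal{F}(\upsilon)=\mathcal{F}_N(\upsilon)$ be the family of all functions $f:\mathbb{Z}_N\to[0,1]$ with $\mathbb{E}(f)\ge \upsilon$, and define $\rho(\upsilon,N)=\min_{f\in\mathcal{F}_N(\upsilon)}\Lambda_3(f)$. *)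

theory Defs
  imports "HOL-Analysis.Analysis" "HOL-Computational_Algebra.Primes"
begin

text \<open>Functions on Z_N are represented as functions nat => real, where only the
values on {0..<N} matter; addition in Z_N is addition mod N.\<close>

definition expect :: "nat \<Rightarrow> (nat \<Rightarrow> real) \<Rightarrow> real" where
  "expect N f = (\<Sum>n<N. f n) / real N"

definition Lambda3 :: "nat \<Rightarrow> (nat \<Rightarrow> real) \<Rightarrow> real" where
  "Lambda3 N f = (\<Sum>n<N. \<Sum>d<N. f n * f ((n + d) mod N) * f ((n + 2 * d) mod N)) / (real N)^2"

definition family :: "nat \<Rightarrow> real \<Rightarrow> (nat \<Rightarrow> real) set" where
  "family N v = {f. (\<forall>n<N. 0 \<le> f n \<and> f n \<le> 1) \<and> expect N f \<ge> v}"

text \<open>The minimum (attained by compactness) is written as an infimum.\<close>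
definition rho :: "real \<Rightarrow> nat \<Rightarrow> real" where
  "rho v N = Inf (Lambda3 N ` family N v)"

end

theory Submission
  imports Defs
begin

text \<open>
  It suffices to show that for every \<open>\<epsilon> > 0\<close> and every large prime \<open>p\<close>, eventually
  \<open>\<rho>(\<upsilon>, q) \<le> \<rho>(\<upsilon>, p) + \<epsilon>\<close>; then the lim sup along the primes is at most the lim inf.
  Take a near-minimiser \<open>f\<close> on \<open>\<int>/p\<close>. Since \<open>\<Lambda>\<^sub>3(f)\<close> is the sum of \<open>F(r)\<^sup>2 F(-2r)\<close> over
  the Fourier coefficients \<open>F\<close> of \<open>f\<close>, and by Parseval only few of them are large,
  averaging \<open>f\<close> along a progression whose difference is chosen by Dirichlet's theorem,
  followed by a dilation, produces \<open>g\<close> with the same mean,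
  almost the same \<open>\<Lambda>\<^sub>3\<close> and small cyclic differences. Such a slowly varying \<open>g\<close> can be
  transplanted to \<open>\<int>/q\<close> for any \<open>q \<gg> p\<close> via \<open>m \<mapsto> \<lfloor>m p / q\<rfloor>\<close>, losing \<open>O(p/q)\<close> in the mean and
  \<open>O(p/q + \<epsilon>)\<close> in \<open>\<Lambda>\<^sub>3\<close>; mixing with a small constant restores the density.
\<close>

lemma mod_eq_iff_int_dvd_diff: "(a::nat) mod N = b mod N \<longleftrightarrow> int N dvd int a - int b"
  by (metis mod_eq_dvd_iff of_nat_eq_iff zmod_int)

lemma int_dvd_diff_mod: "int N dvd int (x mod N) - int x"
  using mod_eq_iff_int_dvd_diff[of "x mod N" N x] by simp

lemma int_dvd_diff_lessThan_iff:
  assumes "a < N" "b < N"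
  shows "int N dvd int b - int a \<longleftrightarrow> b = a"
  using mod_eq_iff_int_dvd_diff[of b N a] assms by simp

lemma bij_betw_mod_lessThan:
  fixes N :: nat
  assumes "N > 0" and "\<And>x y. x < N \<Longrightarrow> y < N \<Longrightarrow> h x mod N = h y mod N \<Longrightarrow> x = y"
  shows "bij_betw (\<lambda>m. h m mod N) {..<N} {..<N}"
proof -
  have inj: "inj_on (\<lambda>m. h m mod N) {..<N}"
    unfolding inj_on_def using assms(2) by blast
  have "(\<lambda>m. h m mod N) ` {..<N} \<subseteq> {..<N}"
    using assms(1) by auto
  then have "(\<lambda>m. h m mod N) ` {..<N} = {..<N}"
    using endo_inj_surj[OF _ _ inj] by simp
  with inj show ?thesis
    by (simp add: bij_betw_def)
qed

lemma bij_betw_add_mod: "(N::nat) > 0 \<Longrightarrow> bij_betw (\<lambda>m. (m + s) mod N) {..<N} {..<N}"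
proof (rule bij_betw_mod_lessThan)
  fix x y assume "x < N" "y < N" "(x + s) mod N = (y + s) mod N"
  then have "int N dvd int x - int y"
    by (simp only: mod_eq_iff_int_dvd_diff) simp
  with \<open>x < N\<close> \<open>y < N\<close> show "x = y"
    by (metis int_dvd_diff_lessThan_iff dvd_diff_commute)
qed

lemma bij_betw_mult_mod:
  fixes N c :: nat
  assumes "N > 0" and "coprime c N"
  shows "bij_betw (\<lambda>m. (c * m) mod N) {..<N} {..<N}"
proof (rule bij_betw_mod_lessThan[OF assms(1)])
  fix x y assume xy: "x < N" "y < N" "c * x mod N = c * y mod N"
  then have "int N dvd int c * (int x - int y)"
    by (simp add: mod_eq_iff_int_dvd_diff right_diff_distrib)
  moreover have "coprime (int N) (int c)"
    using assms(2) by (simp add: coprime_commute)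
  ultimately have "int N dvd int x - int y"
    by (simp add: coprime_dvd_mult_right_iff)
  with xy show "x = y"
    by (metis int_dvd_diff_lessThan_iff dvd_diff_commute)
qed

lemma sum_mult_mod:
  fixes f :: "nat \<Rightarrow> 'a::comm_monoid_add"
  assumes "N > 0" and "coprime c N"
  shows "(\<Sum>n<N. f ((c * n) mod N)) = (\<Sum>n<N. f n)"
  by (rule sum.reindex_bij_betw[OF bij_betw_mult_mod[OF assms]])

definition unit_root :: "nat \<Rightarrow> int \<Rightarrow> complex" where
  "unit_root N k = cis (2 * pi * real_of_int k / real N)"

lemma unit_root_add: "unit_root N (a + b) = unit_root N a * unit_root N b"
  by (simp add: unit_root_def cis_mult add_divide_distrib ring_distribs)

lemma norm_unit_root [simp]: "norm (unit_root N k) = 1"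
  by (simp add: unit_root_def)

lemma cnj_unit_root: "cnj (unit_root N k) = unit_root N (- k)"
  by (simp add: unit_root_def cis_cnj)

lemma unit_root_mult_of_nat: "unit_root N (k * int n) = unit_root N k ^ n"
proof -
  have "unit_root N k ^ n = cis (real n * (2 * pi * real_of_int k / real N))"
    unfolding unit_root_def by (rule Complex.DeMoivre)
  then show ?thesis
    unfolding unit_root_def by (simp add: field_simps)
qed

lemma unit_root_eq_1_iff:
  assumes "N > 0"
  shows "unit_root N k = 1 \<longleftrightarrow> int N dvd k"
proof
  assume "unit_root N k = 1"
  then have "exp (\<i> * complex_of_real (2 * pi * real_of_int k / real N)) = 1"
    by (simp add: unit_root_def cis_conv_exp)
  then obtain n :: int where "2 * pi * real_of_int k / real N = of_int (2 * n) * pi"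
    by (auto simp: exp_eq_1)
  then have "real_of_int k = real N * of_int n"
    using assms by (simp add: field_simps)
  then have "k = int N * n"
    by (metis of_int_eq_iff of_int_mult of_int_of_nat_eq)
  then show "int N dvd k" by simp
next
  assume "int N dvd k"
  then obtain t where "k = int N * t" by (auto elim: dvdE)
  then have "2 * pi * real_of_int k / real N = 2 * pi * real_of_int t"
    using assms by simp
  then show "unit_root N k = 1"
    by (simp add: unit_root_def)
qed

lemma unit_root_cong:
  assumes "N > 0" and "int N dvd a - b"
  shows "unit_root N a = unit_root N b"
  using unit_root_add[of N "a - b" b] unit_root_eq_1_iff[OF assms(1)] assms(2) by simp

lemma sum_unit_root_multiples:
  assumes "N > 0"
  shows "(\<Sum>n<N. unit_root N (k * int n)) = (if int N dvd k then of_nat N else 0)"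
proof (cases "int N dvd k")
  case True
  then have "unit_root N (k * int n) = 1" for n
    using unit_root_eq_1_iff[OF assms] by simp
  with True show ?thesis by simp
next
  case False
  let ?z = "unit_root N k"
  have "?z \<noteq> 1"
    using unit_root_eq_1_iff[OF assms] False by simp
  moreover have "?z ^ N = 1"
    using unit_root_eq_1_iff[OF assms, of "k * int N"] unit_root_mult_of_nat[of N k N] by simp
  ultimately show ?thesis
    using False by (simp add: unit_root_mult_of_nat geometric_sum)
qed

lemma norm_cis_sub_1_le: "norm (cis x - 1) \<le> \<bar>x\<bar>"
proof -
  have "(norm (cis x - 1))\<^sup>2 = 2 - 2 * cos x"
    using sin_cos_squared_add[of x] by (simp add: cmod_def power2_eq_square algebra_simps)
  also have "\<dots> = 4 * (sin (x / 2))\<^sup>2"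
    using cos_double_sin[of "x / 2"] by simp
  also have "\<dots> \<le> 4 * (x / 2)\<^sup>2"
    using abs_sin_x_le_abs_x[of "x / 2"] by (metis abs_le_square_iff mult_left_mono zero_le_numeral)
  also have "\<dots> = x\<^sup>2"
    by (simp add: power_divide)
  finally show ?thesis
    by (metis abs_le_square_iff abs_norm_cancel)
qed

section \<open>Fourier coefficients\<close>

definition fourier :: "nat \<Rightarrow> (nat \<Rightarrow> real) \<Rightarrow> int \<Rightarrow> complex" where
  "fourier N f r = (\<Sum>n<N. of_real (f n) * unit_root N (- r * int n)) / of_nat N"

lemma sum_comm3: "(\<Sum>r\<in>C. \<Sum>a\<in>A. \<Sum>b\<in>B. F r a b) = (\<Sum>a\<in>A. \<Sum>b\<in>B. \<Sum>r\<in>C. F r a b)"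
proof -
  have "(\<Sum>r\<in>C. \<Sum>a\<in>A. \<Sum>b\<in>B. F r a b) = (\<Sum>a\<in>A. \<Sum>r\<in>C. \<Sum>b\<in>B. F r a b)"
    by (rule sum.swap)
  also have "\<dots> = (\<Sum>a\<in>A. \<Sum>b\<in>B. \<Sum>r\<in>C. F r a b)"
    by (rule sum.cong[OF refl], rule sum.swap)
  finally show ?thesis .
qed

lemma sum_comm4: "(\<Sum>r\<in>D. \<Sum>a\<in>A. \<Sum>b\<in>B. \<Sum>c\<in>C. F r a b c) = (\<Sum>a\<in>A. \<Sum>b\<in>B. \<Sum>c\<in>C. \<Sum>r\<in>D. F r a b c)"
proof -
  have "(\<Sum>r\<in>D. \<Sum>a\<in>A. \<Sum>b\<in>B. \<Sum>c\<in>C. F r a b c) = (\<Sum>a\<in>A. \<Sum>r\<in>D. \<Sum>b\<in>B. \<Sum>c\<in>C. F r a b c)"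
    by (rule sum.swap)
  also have "\<dots> = (\<Sum>a\<in>A. \<Sum>b\<in>B. \<Sum>c\<in>C. \<Sum>r\<in>D. F r a b c)"
    by (rule sum.cong[OF refl], rule sum_comm3)
  finally show ?thesis .
qed

lemma sum_product3:
  fixes f g h :: "nat \<Rightarrow> complex"
  shows "sum f A * sum g B * sum h C = (\<Sum>a\<in>A. \<Sum>b\<in>B. \<Sum>c\<in>C. f a * g b * h c)"
proof -
  have "sum f A * sum g B * sum h C = (\<Sum>a\<in>A. \<Sum>b\<in>B. f a * g b) * sum h C"
    by (simp only: sum_product)
  also have "\<dots> = (\<Sum>a\<in>A. (\<Sum>b\<in>B. f a * g b) * sum h C)"
    by (rule sum_distrib_right)
  also have "\<dots> = (\<Sum>a\<in>A. \<Sum>b\<in>B. f a * g b * sum h C)"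
    by (rule sum.cong[OF refl], rule sum_distrib_right)
  also have "\<dots> = (\<Sum>a\<in>A. \<Sum>b\<in>B. \<Sum>c\<in>C. f a * g b * h c)"
    by (rule sum.cong[OF refl], rule sum.cong[OF refl], rule sum_distrib_left)
  finally show ?thesis .
qed

lemma norm_fourier_le_1:
  assumes f: "\<And>n. n < N \<Longrightarrow> 0 \<le> f n \<and> f n \<le> 1"
  shows "norm (fourier N f s) \<le> 1"
proof (cases "N = 0")
  case True thus ?thesis by (simp add: fourier_def)
next
  case False
  have "norm (\<Sum>n<N. of_real (f n) * unit_root N (- s * int n)) \<le> (\<Sum>n<N. norm (of_real (f n) * unit_root N (- s * int n)))"
    by (rule norm_sum)
  also have "\<dots> \<le> (\<Sum>n<N. 1)"
    by (rule sum_mono) (use f in \<open>auto simp: norm_mult\<close>)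
  finally show ?thesis using False by (simp add: fourier_def norm_divide)
qed

lemma norm_fourier_squared:
  "complex_of_real ((norm (fourier N f s))^2) =
     (\<Sum>a<N. \<Sum>b<N. of_real (f a * f b) * unit_root N ((int b - int a) * s)) / (of_nat N)^2"
proof -
  have c: "cnj (fourier N f s) = (\<Sum>b<N. of_real (f b) * unit_root N (s * int b)) / of_nat N"
  proof -
    have "cnj (of_real (f b) * unit_root N (- s * int b)) = of_real (f b) * unit_root N (s * int b)" for b
      by (simp add: cnj_unit_root)
    hence "cnj (\<Sum>b<N. of_real (f b) * unit_root N (- s * int b)) = (\<Sum>b<N. of_real (f b) * unit_root N (s * int b))"
      unfolding cnj_sum by (rule sum.cong[OF refl])
    thus ?thesis unfolding fourier_def by simp
  qed
  have "complex_of_real ((norm (fourier N f s))^2) = fourier N f s * cnj (fourier N f s)"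
    by (rule complex_norm_square)
  also have "\<dots> = ((\<Sum>a<N. of_real (f a) * unit_root N (- s * int a)) * (\<Sum>b<N. of_real (f b) * unit_root N (s * int b))) / (of_nat N)^2"
    unfolding c unfolding fourier_def by (simp add: power2_eq_square)
  also have "\<dots> = (\<Sum>a<N. \<Sum>b<N. (of_real (f a) * unit_root N (- s * int a)) * (of_real (f b) * unit_root N (s * int b))) / (of_nat N)^2"
    by (simp add: sum_product)
  also have "\<dots> = (\<Sum>a<N. \<Sum>b<N. of_real (f a * f b) * unit_root N ((int b - int a) * s)) / (of_nat N)^2"
  proof -
    have "(of_real (f a) * unit_root N (- s * int a)) * (of_real (f b) * unit_root N (s * int b)) =
          of_real (f a * f b) * unit_root N ((int b - int a) * s)" (is "?X a b = ?Y a b") for a b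
    proof -
      have "unit_root N ((int b - int a) * s) = unit_root N (- s * int a + s * int b)"
        by (simp add: algebra_simps)
      also have "\<dots> = unit_root N (- s * int a) * unit_root N (s * int b)"
        by (rule unit_root_add)
      finally show ?thesis by simp
    qed
    thus ?thesis by (simp only:)
  qed
  finally show ?thesis .
qed

lemma sum_norm_fourier_dilated:
  assumes N: "N > 0" and cop: "coprime t (int N)"
  shows "(\<Sum>r<N. (norm (fourier N f (t * int r)))^2) = (\<Sum>a<N. (f a)^2) / real N"
proof -
  have "complex_of_real (\<Sum>r<N. (norm (fourier N f (t * int r)))^2) =
     (\<Sum>r<N. (\<Sum>a<N. \<Sum>b<N. of_real (f a * f b) * unit_root N ((int b - int a) * (t * int r))) / (of_nat N)^2)"
    by (simp only: of_real_sum norm_fourier_squared)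
  also have "\<dots> = (\<Sum>r<N. \<Sum>a<N. \<Sum>b<N. of_real (f a * f b) * unit_root N ((int b - int a) * (t * int r))) / (of_nat N)^2"
    by (rule sum_divide_distrib[symmetric])
  also have "\<dots> = (\<Sum>a<N. \<Sum>b<N. \<Sum>r<N. of_real (f a * f b) * unit_root N ((int b - int a) * (t * int r))) / (of_nat N)^2"
    by (subst sum_comm3) (rule refl)
  also have "\<dots> = (\<Sum>a<N. \<Sum>b<N. of_real (f a * f b) * (\<Sum>r<N. unit_root N (((int b - int a) * t) * int r))) / (of_nat N)^2"
    by (simp only: sum_distrib_left mult.assoc)
  also have "\<dots> = (\<Sum>a<N. \<Sum>b<N. of_real (f a * f b) * (if b = a then of_nat N else 0)) / (of_nat N)^2"
  proof -
    have "int N dvd (int b - int a) * t \<longleftrightarrow> b = a" if "a < N" "b < N" for a b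
    proof -
      have "coprime (int N) t" using cop by (simp add: coprime_commute)
      hence "int N dvd (int b - int a) * t \<longleftrightarrow> int N dvd (int b - int a)"
        by (simp add: coprime_dvd_mult_left_iff)
      thus ?thesis using int_dvd_diff_lessThan_iff that by blast
    qed
    thus ?thesis by (simp add: sum_unit_root_multiples[OF N])
  qed
  also have "\<dots> = (\<Sum>a<N. of_real ((f a)^2) * of_nat N) / (of_nat N)^2"
    by (simp add: power2_eq_square if_distrib sum.delta cong: if_cong)
  also have "\<dots> = complex_of_real ((\<Sum>a<N. (f a)^2) / real N)"
    using N by (simp add: sum_distrib_right[symmetric] power2_eq_square)
  finally show ?thesis by (simp only: of_real_eq_iff)
qed

definition third_term :: "nat \<Rightarrow> nat \<Rightarrow> nat \<Rightarrow> nat" where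
  "third_term N a c = nat ((2 * int c - int a) mod int N)"

lemma third_term_less: "N > 0 \<Longrightarrow> third_term N a c < N"
  by (simp add: third_term_def nat_less_iff)

lemma int_dvd_iff_eq_third_term:
  assumes N: "N > 0" and b: "b < N"
  shows "int N dvd 2 * int c - int a - int b \<longleftrightarrow> b = third_term N a c"
proof -
  have "int N dvd 2 * int c - int a - int b \<longleftrightarrow> (2 * int c - int a) mod int N = int b mod int N"
    by (simp add: mod_eq_dvd_iff)
  also have "\<dots> \<longleftrightarrow> b = third_term N a c"
    using N b by (auto simp: third_term_def)
  finally show ?thesis .
qed

lemma third_term_add_mod: "third_term N n ((n + d) mod N) = (n + 2 * d) mod N"
proof -
  have 1: "int N dvd int ((n + d) mod N) - int (n + d)"
    using mod_eq_iff_int_dvd_diff[of "(n+d) mod N" N "n+d"] by simp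
  have "int N dvd (2 * int ((n + d) mod N) - int n) - int (n + 2 * d)"
    using dvd_mult[OF 1, of 2] by (simp add: algebra_simps)
  hence "(2 * int ((n + d) mod N) - int n) mod int N = int (n + 2 * d) mod int N"
    by (simp add: mod_eq_dvd_iff)
  also have "\<dots> = int ((n + 2 * d) mod N)" by (rule zmod_int[symmetric])
  finally show ?thesis
    unfolding third_term_def by simp
qed

lemma Lambda3_eq_sum_third_term:
  assumes N: "N > 0"
  shows "Lambda3 N f = (\<Sum>a<N. \<Sum>c<N. f a * f c * f (third_term N a c)) / (real N)^2"
proof -
  have "(\<Sum>d<N. f ((n + d) mod N) * f ((n + 2 * d) mod N)) = (\<Sum>c<N. f c * f (third_term N n c))" for n
  proof -
    have "(\<Sum>c<N. f c * f (third_term N n c)) = (\<Sum>d<N. f ((d + n) mod N) * f (third_term N n ((d + n) mod N)))"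
      by (rule sum.reindex_bij_betw[symmetric, OF bij_betw_add_mod[OF N]])
    also have "\<dots> = (\<Sum>d<N. f ((n + d) mod N) * f ((n + 2 * d) mod N))"
    proof (rule sum.cong[OF refl])
      fix d
      have "third_term N n ((d + n) mod N) = (n + 2 * d) mod N"
        using third_term_add_mod[of N n d] by (simp add: add.commute)
      thus "f ((d + n) mod N) * f (third_term N n ((d + n) mod N)) = f ((n + d) mod N) * f ((n + 2 * d) mod N)"
        by (simp add: add.commute)
    qed
    finally show ?thesis by simp
  qed
  note inner = this
  have "(\<Sum>n<N. \<Sum>d<N. f n * f ((n + d) mod N) * f ((n + 2 * d) mod N)) = (\<Sum>a<N. \<Sum>c<N. f a * f c * f (third_term N a c))"
  proof (rule sum.cong[OF refl])
    fix n
    have "(\<Sum>d<N. f n * f ((n + d) mod N) * f ((n + 2 * d) mod N)) = f n * (\<Sum>d<N. f ((n + d) mod N) * f ((n + 2 * d) mod N))"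
      by (simp add: sum_distrib_left mult.assoc)
    also have "\<dots> = f n * (\<Sum>c<N. f c * f (third_term N n c))" by (simp only: inner)
    also have "\<dots> = (\<Sum>c<N. f n * f c * f (third_term N n c))"
      by (simp add: sum_distrib_left mult.assoc)
    finally show "(\<Sum>d<N. f n * f ((n + d) mod N) * f ((n + 2 * d) mod N)) = (\<Sum>c<N. f n * f c * f (third_term N n c))" .
  qed
  thus ?thesis by (simp add: Lambda3_def)
qed

lemma fourier_square_mult:
  "(fourier N f r)^2 * fourier N f (-2 * r) =
     (\<Sum>a<N. \<Sum>b<N. \<Sum>c<N. of_real (f a * f b * f c) * unit_root N ((2 * int c - int a - int b) * r))
     / (of_nat N)^3"
proof -
  have "(fourier N f r)^2 * fourier N f (-2 * r) =
    ((\<Sum>a<N. of_real (f a) * unit_root N (- r * int a)) * (\<Sum>b<N. of_real (f b) * unit_root N (- r * int b))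
     * (\<Sum>c<N. of_real (f c) * unit_root N (- (-2 * r) * int c))) / (of_nat N)^3"
    unfolding fourier_def by (simp add: power2_eq_square power3_eq_cube)
  also have "\<dots> = (\<Sum>a<N. \<Sum>b<N. \<Sum>c<N. (of_real (f a) * unit_root N (- r * int a)) * (of_real (f b) * unit_root N (- r * int b))
     * (of_real (f c) * unit_root N (- (-2 * r) * int c))) / (of_nat N)^3"
    by (simp only: sum_product3)
  also have "\<dots> = (\<Sum>a<N. \<Sum>b<N. \<Sum>c<N. of_real (f a * f b * f c) * unit_root N ((2 * int c - int a - int b) * r)) / (of_nat N)^3"
  proof -
    have "(of_real (f a) * unit_root N (- r * int a)) * (of_real (f b) * unit_root N (- r * int b))
     * (of_real (f c) * unit_root N (- (-2 * r) * int c)) = of_real (f a * f b * f c) * unit_root N ((2 * int c - int a - int b) * r)" for a b c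
    proof -
      have "unit_root N ((2 * int c - int a - int b) * r) = unit_root N (- r * int a + (- r * int b) + (- (-2 * r) * int c))"
        by (simp add: algebra_simps)
      also have "\<dots> = unit_root N (- r * int a) * unit_root N (- r * int b) * unit_root N (- (-2 * r) * int c)"
        by (simp only: unit_root_add)
      finally show ?thesis by simp
    qed
    thus ?thesis by (simp only:)
  qed
  finally show ?thesis .
qed

lemma Lambda3_fourier:
  assumes N: "N > 0"
  shows "complex_of_real (Lambda3 N f) = (\<Sum>r<N. (fourier N f (int r))^2 * fourier N f (-2 * int r))"
proof -
  define X where "X a b c = complex_of_real (f a * f b * f c)" for a b c
  have coeff_product: "(fourier N f (int r))^2 * fourier N f (-2 * int r) =
     (\<Sum>a<N. \<Sum>b<N. \<Sum>c<N. X a b c * unit_root N ((2 * int c - int a - int b) * int r)) / (of_nat N)^3" for r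
    unfolding X_def by (rule fourier_square_mult)
  have "(\<Sum>r<N. (fourier N f (int r))^2 * fourier N f (-2 * int r)) =
     (\<Sum>r<N. \<Sum>a<N. \<Sum>b<N. \<Sum>c<N. X a b c * unit_root N ((2 * int c - int a - int b) * int r)) / (of_nat N)^3"
    by (simp only: coeff_product sum_divide_distrib[symmetric])
  also have "\<dots> = (\<Sum>a<N. \<Sum>b<N. \<Sum>c<N. \<Sum>r<N. X a b c * unit_root N ((2 * int c - int a - int b) * int r)) / (of_nat N)^3"
    by (subst sum_comm4) (rule refl)
  also have "\<dots> = (\<Sum>a<N. \<Sum>b<N. \<Sum>c<N. X a b c * (if int N dvd (2 * int c - int a - int b) then of_nat N else 0)) / (of_nat N)^3"
    by (simp only: sum_distrib_left[symmetric] sum_unit_root_multiples[OF N])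
  also have "\<dots> = (\<Sum>a<N. \<Sum>c<N. \<Sum>b<N. X a b c * (if int N dvd (2 * int c - int a - int b) then of_nat N else 0)) / (of_nat N)^3"
    by (subst (2) sum.swap) (rule refl)
  also have "\<dots> = (\<Sum>a<N. \<Sum>c<N. X a (third_term N a c) c * of_nat N) / (of_nat N)^3"
  proof -
    have "(\<Sum>b<N. X a b c * (if int N dvd (2 * int c - int a - int b) then of_nat N else 0)) = X a (third_term N a c) c * of_nat N" for a c
    proof -
      have "(\<Sum>b<N. X a b c * (if int N dvd (2 * int c - int a - int b) then of_nat N else 0)) =
            (\<Sum>b<N. if b = third_term N a c then X a b c * of_nat N else 0)"
        by (rule sum.cong[OF refl]) (simp add: int_dvd_iff_eq_third_term[OF N])
      also have "\<dots> = X a (third_term N a c) c * of_nat N"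
        using N by (simp add: sum.delta third_term_def nat_less_iff)
      finally show ?thesis .
    qed
    thus ?thesis by (simp only:)
  qed
  also have "\<dots> = (\<Sum>a<N. \<Sum>c<N. X a (third_term N a c) c) / (of_nat N)^2"
    using N by (simp add: sum_distrib_right[symmetric] power2_eq_square power3_eq_cube)
  also have "\<dots> = complex_of_real (Lambda3 N f)"
    unfolding Lambda3_eq_sum_third_term[OF N] X_def by (simp add: mult_ac)
  finally show ?thesis by simp
qed

definition dilate :: "nat \<Rightarrow> nat \<Rightarrow> (nat \<Rightarrow> real) \<Rightarrow> nat \<Rightarrow> real" where
  "dilate N c f n = f ((c * n) mod N)"

lemma third_term_dilate:
  assumes N: "N > 0"
  shows "(c * third_term N a b) mod N = third_term N ((c * a) mod N) ((c * b) mod N)"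
proof -
  let ?y = "(c * third_term N a b) mod N"
  have y: "?y < N" using N by simp
  have d1: "int N dvd 2 * int b - int a - int (third_term N a b)"
    using int_dvd_iff_eq_third_term[OF N third_term_less[OF N]] by simp
  have "int N dvd int c * (2 * int b - int a - int (third_term N a b))" using d1 by simp
  moreover have "int N dvd 2 * (int ((c * b) mod N) - int (c * b))"
    by (rule dvd_mult, rule int_dvd_diff_mod)
  moreover have "int N dvd (int ((c * a) mod N) - int (c * a))" by (rule int_dvd_diff_mod)
  moreover have "int N dvd (int ?y - int (c * third_term N a b))" by (rule int_dvd_diff_mod)
  ultimately have "int N dvd int c * (2 * int b - int a - int (third_term N a b))
      + 2 * (int ((c * b) mod N) - int (c * b)) - (int ((c * a) mod N) - int (c * a)) - (int ?y - int (c * third_term N a b))"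
    by (simp add: dvd_add dvd_diff)
  hence "int N dvd 2 * int ((c * b) mod N) - int ((c * a) mod N) - int ?y"
    by (simp add: algebra_simps)
  thus ?thesis using int_dvd_iff_eq_third_term[OF N y] by simp
qed

lemma Lambda3_dilate:
  assumes N: "N > 0" and cop: "coprime c N"
  shows "Lambda3 N (dilate N c f) = Lambda3 N f"
proof -
  have "(\<Sum>a<N. \<Sum>b<N. dilate N c f a * dilate N c f b * dilate N c f (third_term N a b)) =
        (\<Sum>a<N. \<Sum>b<N. f ((c * a) mod N) * f ((c * b) mod N) * f (third_term N ((c * a) mod N) ((c * b) mod N)))"
    by (simp add: dilate_def third_term_dilate[OF N])
  also have "\<dots> = (\<Sum>a<N. \<Sum>b<N. f a * f ((c * b) mod N) * f (third_term N a ((c * b) mod N)))"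
    by (rule sum.reindex_bij_betw[OF bij_betw_mult_mod[OF N cop], where g = "\<lambda>a. \<Sum>b<N. f a * f ((c * b) mod N) * f (third_term N a ((c * b) mod N))"])
  also have "\<dots> = (\<Sum>a<N. \<Sum>b<N. f a * f b * f (third_term N a b))"
    by (rule sum.cong[OF refl], rule sum.reindex_bij_betw[OF bij_betw_mult_mod[OF N cop]])
  finally show ?thesis by (simp add: Lambda3_eq_sum_third_term[OF N])
qed

section \<open>Averaging along an arithmetic progression\<close>

definition avg_prog :: "nat \<Rightarrow> nat \<Rightarrow> nat \<Rightarrow> (nat \<Rightarrow> real) \<Rightarrow> nat \<Rightarrow> real" where
  "avg_prog N c L f m = (\<Sum>j<L. f ((m + c * j) mod N)) / real L"

definition prog_multiplier :: "nat \<Rightarrow> nat \<Rightarrow> nat \<Rightarrow> int \<Rightarrow> complex" where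
  "prog_multiplier N c L r = (\<Sum>j<L. unit_root N (r * int (c * j))) / of_nat L"

lemma sum_shift_mod_unit_root:
  assumes N: "N > 0"
  shows "(\<Sum>m<N. of_real (f ((m + s) mod N)) * unit_root N (- r * int m)) =
         (\<Sum>m<N. of_real (f m) * unit_root N (- r * int m)) * unit_root N (r * int s)"
proof -
  have "(\<Sum>m<N. of_real (f m) * unit_root N (- r * int m)) * unit_root N (r * int s) =
        (\<Sum>m<N. of_real (f m) * unit_root N (- r * int m) * unit_root N (r * int s))"
    by (simp add: sum_distrib_right)
  also have "\<dots> = (\<Sum>m<N. of_real (f ((m + s) mod N)) * unit_root N (- r * int ((m + s) mod N)) * unit_root N (r * int s))"
    by (rule sum.reindex_bij_betw[symmetric, OF bij_betw_add_mod[OF N]])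
  also have "\<dots> = (\<Sum>m<N. of_real (f ((m + s) mod N)) * unit_root N (- r * int m))"
  proof (rule sum.cong[OF refl])
    fix m
    have "unit_root N (- r * int ((m + s) mod N)) * unit_root N (r * int s) = unit_root N (- r * int ((m + s) mod N) + r * int s)"
      by (rule unit_root_add[symmetric])
    also have "\<dots> = unit_root N (- r * int m)"
    proof (rule unit_root_cong[OF N])
      have "int N dvd (- r) * (int ((m + s) mod N) - int (m + s))"
        using int_dvd_diff_mod[of N "m + s"] by simp
      then show "int N dvd (- r * int ((m + s) mod N) + r * int s) - (- r * int m)"
        by (simp add: algebra_simps)
    qed
    finally show "of_real (f ((m + s) mod N)) * unit_root N (- r * int ((m + s) mod N)) * unit_root N (r * int s) =
        of_real (f ((m + s) mod N)) * unit_root N (- r * int m)" by (simp add: mult.assoc)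
  qed
  finally show ?thesis by simp
qed

lemma fourier_avg_prog:
  assumes N: "N > 0"
  shows "fourier N (avg_prog N c L f) r = fourier N f r * prog_multiplier N c L r"
proof -
  have "fourier N (avg_prog N c L f) r = (\<Sum>m<N. \<Sum>j<L. of_real (f ((m + c * j) mod N)) * unit_root N (- r * int m)) / (of_nat L * of_nat N)"
    unfolding fourier_def avg_prog_def by (simp add: sum_distrib_right sum_divide_distrib[symmetric] of_real_sum)
  also have "\<dots> = (\<Sum>j<L. \<Sum>m<N. of_real (f ((m + c * j) mod N)) * unit_root N (- r * int m)) / (of_nat L * of_nat N)"
    by (subst sum.swap) (rule refl)
  also have "\<dots> = (\<Sum>j<L. (\<Sum>m<N. of_real (f m) * unit_root N (- r * int m)) * unit_root N (r * int (c * j))) / (of_nat L * of_nat N)"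
    by (simp only: sum_shift_mod_unit_root[OF N])
  also have "\<dots> = ((\<Sum>m<N. of_real (f m) * unit_root N (- r * int m)) * (\<Sum>j<L. unit_root N (r * int (c * j)))) / (of_nat L * of_nat N)"
    by (simp only: sum_distrib_left)
  also have "\<dots> = ((\<Sum>m<N. of_real (f m) * unit_root N (- r * int m)) / of_nat N) * ((\<Sum>j<L. unit_root N (r * int (c * j))) / of_nat L)"
    by (simp only: times_divide_times_eq mult.commute[of "of_nat L :: complex"])
  also have "\<dots> = fourier N f r * prog_multiplier N c L r"
    unfolding fourier_def prog_multiplier_def by (rule refl)
  finally show ?thesis .
qed

lemma norm_prog_multiplier_le_1: "norm (prog_multiplier N c L r) \<le> 1"
proof (cases "L = 0")
  case True thus ?thesis by (simp add: prog_multiplier_def)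
next
  case False
  have "norm (\<Sum>j<L. unit_root N (r * int (c * j))) \<le> (\<Sum>j<L. norm (unit_root N (r * int (c * j))))"
    by (rule norm_sum)
  also have "\<dots> = real L" by simp
  finally show ?thesis using False by (simp add: prog_multiplier_def norm_divide)
qed

lemma norm_unit_root_sub_1_le:
  assumes N: "N > 0" and k: "\<bar>real_of_int s * real c / real N - real_of_int k\<bar> \<le> \<theta>"
  shows "norm (unit_root N (s * int (c * j)) - 1) \<le> 2 * pi * real j * \<theta>"
proof -
  let ?x = "2 * pi * real j * (real_of_int s * real c / real N - real_of_int k)"
  have "2 * pi * real_of_int (s * int (c * j)) / real N = ?x + 2 * pi * real_of_int (int j * k)"
    using N by (simp add: field_simps)
  hence "unit_root N (s * int (c * j)) = cis (?x + 2 * pi * real_of_int (int j * k))"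
    unfolding unit_root_def by (rule arg_cong)
  also have "\<dots> = cis ?x * cis (2 * pi * real_of_int (int j * k))"
    by (rule cis_mult[symmetric])
  also have "cis (2 * pi * real_of_int (int j * k)) = 1" by (rule cis_multiple_2pi) simp
  finally have "unit_root N (s * int (c * j)) = cis ?x" by simp
  hence "norm (unit_root N (s * int (c * j)) - 1) \<le> \<bar>?x\<bar>" using norm_cis_sub_1_le by simp
  also have "\<bar>?x\<bar> = 2 * pi * real j * \<bar>real_of_int s * real c / real N - real_of_int k\<bar>"
    by (simp add: abs_mult)
  also have "\<dots> \<le> 2 * pi * real j * \<theta>" using k by (intro mult_left_mono) auto
  finally show ?thesis .
qed

lemma norm_prog_multiplier_sub_1_le:
  assumes N: "N > 0" and L: "L > 0"
  and k: "\<bar>real_of_int s * real c / real N - real_of_int k\<bar> \<le> \<theta>"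
  shows "norm (prog_multiplier N c L s - 1) \<le> 2 * pi * real L * \<theta>"
proof -
  have th: "\<theta> \<ge> 0" using k by linarith
  have "prog_multiplier N c L s - 1 = (\<Sum>j<L. unit_root N (s * int (c * j)) - 1) / of_nat L"
    using L by (simp add: prog_multiplier_def sum_subtractf field_simps)
  hence "norm (prog_multiplier N c L s - 1) = norm (\<Sum>j<L. unit_root N (s * int (c * j)) - 1) / real L"
    by (simp add: norm_divide)
  also have "\<dots> \<le> (\<Sum>j<L. 2 * pi * real L * \<theta>) / real L"
  proof (rule divide_right_mono)
    have "norm (\<Sum>j<L. unit_root N (s * int (c * j)) - 1) \<le> (\<Sum>j<L. norm (unit_root N (s * int (c * j)) - 1))"
      by (rule norm_sum)
    also have "\<dots> \<le> (\<Sum>j<L. 2 * pi * real L * \<theta>)"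
    proof (rule sum_mono)
      fix j assume "j \<in> {..<L}"
      hence "real j \<le> real L" by simp
      hence "2 * pi * real j * \<theta> \<le> 2 * pi * real L * \<theta>" using th by (simp add: mult_right_mono)
      thus "norm (unit_root N (s * int (c * j)) - 1) \<le> 2 * pi * real L * \<theta>"
        using norm_unit_root_sub_1_le[OF N k, of j] by linarith
    qed
    finally show "norm (\<Sum>j<L. unit_root N (s * int (c * j)) - 1) \<le> (\<Sum>j<L. 2 * pi * real L * \<theta>)" .
  qed simp
  also have "\<dots> = 2 * pi * real L * \<theta>" using L by simp
  finally show ?thesis .
qed

lemma norm_square_mult_sub_1_le:
  fixes a b :: complex
  assumes a: "norm a \<le> 1" and b: "norm b \<le> 1"
  shows "norm (a^2 * b - 1) \<le> norm (b - 1) + 2 * norm (a - 1)"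
proof -
  have "a^2 * b - 1 = a^2 * (b - 1) + (a - 1) * (a + 1)"
    by (simp add: algebra_simps power2_eq_square)
  hence "norm (a^2 * b - 1) \<le> norm (a^2 * (b - 1)) + norm ((a - 1) * (a + 1))"
    by (metis norm_triangle_ineq)
  also have "norm (a^2 * (b - 1)) \<le> norm (b - 1)"
  proof -
    have "norm (a^2) \<le> 1" using a by (simp add: norm_power power_le_one)
    thus ?thesis by (simp add: norm_mult mult_left_le_one_le)
  qed
  also have "norm ((a - 1) * (a + 1)) \<le> norm (a - 1) * 2"
  proof -
    have "norm (a + 1) \<le> 2" using a norm_triangle_ineq[of a 1] by simp
    thus ?thesis by (simp add: norm_mult mult_left_mono)
  qed
  finally show ?thesis by simp
qed

lemma norm_square_mult_sub_1_le_2: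
  fixes a b :: complex
  assumes a: "norm a \<le> 1" and b: "norm b \<le> 1"
  shows "norm (a^2 * b - 1) \<le> 2"
proof -
  have "norm (a^2 * b) \<le> 1"
    using a b by (simp add: norm_mult norm_power power_le_one mult_le_one)
  thus ?thesis using norm_triangle_ineq4[of "a^2 * b" 1] by simp
qed

lemma mean_square_le_1:
  assumes f: "\<And>n. n < N \<Longrightarrow> 0 \<le> f n \<and> f n \<le> 1"
  shows "(\<Sum>a<N. (f a)^2) / real N \<le> 1"
proof (cases "N = 0")
  case True thus ?thesis by simp
next
  case False
  have "(\<Sum>a<N. (f a)^2) \<le> (\<Sum>a<N. 1)"
    by (rule sum_mono) (use f in \<open>auto simp: power_le_one\<close>)
  thus ?thesis using False by simp
qed

lemma norm_fourier_multiplier_error_le: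
  assumes N: "N > 0" and L: "L > 0" and f: "\<And>n. n < N \<Longrightarrow> 0 \<le> f n \<and> f n \<le> 1"
    and \<delta>: "\<delta> \<ge> 0" and \<theta>: "\<theta> \<ge> 0"
    and approx: "\<delta> \<le> norm (fourier N f (-2 * int r)) \<Longrightarrow>
      \<exists>k::int. \<bar>real r * real c / real N - real_of_int k\<bar> \<le> \<theta>"
  shows "norm (fourier N f (-2 * int r)) *
      norm ((prog_multiplier N c L (int r))\<^sup>2 * prog_multiplier N c L (-2 * int r) - 1)
    \<le> 2 * \<delta> + 8 * pi * real L * \<theta>"
proof (cases "\<delta> \<le> norm (fourier N f (-2 * int r))")
  case True
  then obtain k :: int where k: "\<bar>real r * real c / real N - real_of_int k\<bar> \<le> \<theta>"
    using approx by auto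
  have k1: "\<bar>real_of_int (int r) * real c / real N - real_of_int k\<bar> \<le> \<theta>"
    using k by simp
  have "real_of_int (-2 * int r) * real c / real N - real_of_int (-2 * k) =
      -2 * (real r * real c / real N - real_of_int k)"
    by (simp add: algebra_simps)
  then have k2: "\<bar>real_of_int (-2 * int r) * real c / real N - real_of_int (-2 * k)\<bar> \<le> 2 * \<theta>"
    using k by simp
  have "norm ((prog_multiplier N c L (int r))\<^sup>2 * prog_multiplier N c L (-2 * int r) - 1)
      \<le> norm (prog_multiplier N c L (-2 * int r) - 1) + 2 * norm (prog_multiplier N c L (int r) - 1)"
    by (rule norm_square_mult_sub_1_le[OF norm_prog_multiplier_le_1 norm_prog_multiplier_le_1])
  also have "\<dots> \<le> 8 * pi * real L * \<theta>"
    using norm_prog_multiplier_sub_1_le[OF N L k1] norm_prog_multiplier_sub_1_le[OF N L k2] by simp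
  finally have "norm (fourier N f (-2 * int r)) *
      norm ((prog_multiplier N c L (int r))\<^sup>2 * prog_multiplier N c L (-2 * int r) - 1)
      \<le> 1 * (8 * pi * real L * \<theta>)"
    using norm_fourier_le_1[OF f] by (intro mult_mono) auto
  with \<delta> show ?thesis
    by simp
next
  case False
  have "norm ((prog_multiplier N c L (int r))\<^sup>2 * prog_multiplier N c L (-2 * int r) - 1) \<le> 2"
    by (rule norm_square_mult_sub_1_le_2[OF norm_prog_multiplier_le_1 norm_prog_multiplier_le_1])
  with False \<delta> have "norm (fourier N f (-2 * int r)) *
      norm ((prog_multiplier N c L (int r))\<^sup>2 * prog_multiplier N c L (-2 * int r) - 1) \<le> \<delta> * 2"
    by (intro mult_mono) auto
  moreover have "0 \<le> 8 * pi * real L * \<theta>"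
    using \<theta> by simp
  ultimately show ?thesis
    by linarith
qed

text \<open>In the Fourier expression of \<open>\<Lambda>\<^sub>3\<close>, averaging multiplies each term by the error factor
  bounded in the hypothesis; Parseval then bounds the total change by \<open>E\<close>.\<close>

lemma Lambda3_avg_prog_le:
  assumes N: "N > 0" and f: "\<And>n. n < N \<Longrightarrow> 0 \<le> f n \<and> f n \<le> 1" and E: "0 \<le> E"
    and bound: "\<And>r. r < N \<Longrightarrow> norm (fourier N f (-2 * int r)) *
      norm ((prog_multiplier N c L (int r))\<^sup>2 * prog_multiplier N c L (-2 * int r) - 1) \<le> E"
  shows "Lambda3 N (avg_prog N c L f) \<le> Lambda3 N f + E"
proof -
  define D where "D r = (fourier N f (int r))\<^sup>2 * fourier N f (-2 * int r) *
      ((prog_multiplier N c L (int r))\<^sup>2 * prog_multiplier N c L (-2 * int r) - 1)" for r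
  have "complex_of_real (Lambda3 N (avg_prog N c L f)) - complex_of_real (Lambda3 N f) = (\<Sum>r<N. D r)"
    unfolding Lambda3_fourier[OF N] fourier_avg_prog[OF N] D_def sum_subtractf[symmetric]
    by (rule sum.cong[OF refl]) (simp add: algebra_simps power2_eq_square)
  then have "Lambda3 N (avg_prog N c L f) - Lambda3 N f \<le> norm (\<Sum>r<N. D r)"
    by (metis abs_ge_self norm_of_real of_real_diff)
  also have "\<dots> \<le> (\<Sum>r<N. norm (D r))"
    by (rule norm_sum)
  also have "\<dots> \<le> (\<Sum>r<N. (norm (fourier N f (1 * int r)))\<^sup>2 * E)"
  proof (rule sum_mono)
    fix r assume "r \<in> {..<N}"
    then have "norm (D r) \<le> (norm (fourier N f (int r)))\<^sup>2 * E"
      unfolding D_def norm_mult norm_power mult.assoc[symmetric, of "_ ^ 2"]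
      using bound by (simp add: mult.assoc mult_left_mono)
    then show "norm (D r) \<le> (norm (fourier N f (1 * int r)))\<^sup>2 * E"
      by simp
  qed
  also have "\<dots> = (\<Sum>a<N. (f a)\<^sup>2) / real N * E"
    by (simp only: sum_distrib_right[symmetric] sum_norm_fourier_dilated[OF N, of 1] coprime_1_left)
  also have "\<dots> \<le> E"
    using mult_right_mono[OF mean_square_le_1[OF f] E] by simp
  finally show ?thesis
    by simp
qed

lemma card_large_fourier_le:
  assumes N: "N > 0" and odd: "coprime (-2) (int N)"
  and f: "\<And>n. n < N \<Longrightarrow> 0 \<le> f n \<and> f n \<le> 1" and \<delta>: "\<delta> > 0"
  shows "real (card {r. r < N \<and> \<delta> \<le> norm (fourier N f (-2 * int r))}) * \<delta>^2 \<le> 1"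
proof -
  let ?R = "{r. r < N \<and> \<delta> \<le> norm (fourier N f (-2 * int r))}"
  have sub: "?R \<subseteq> {..<N}" by auto
  have "real (card ?R) * \<delta>^2 = (\<Sum>r\<in>?R. \<delta>^2)" by simp
  also have "\<dots> \<le> (\<Sum>r\<in>?R. (norm (fourier N f (-2 * int r)))^2)"
    by (rule sum_mono) (use \<delta> in \<open>auto intro: power_mono\<close>)
  also have "\<dots> \<le> (\<Sum>r<N. (norm (fourier N f (-2 * int r)))^2)"
    by (rule sum_mono2[OF _ sub]) auto
  also have "\<dots> = (\<Sum>a<N. (f a)^2) / real N" by (rule sum_norm_fourier_dilated[OF N odd])
  also have "\<dots> \<le> 1" by (rule mean_square_le_1[OF f])
  finally show ?thesis .
qed

section \<open>Smoothing at a large prime\<close>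

text \<open>Averaging along the progression of difference \<open>c\<close> and then dilating by \<open>c\<close> turns that
  progression into one of difference 1, so the result varies by at most \<open>1/L\<close> per step.
  Dilation by a unit preserves \<open>\<Lambda>\<^sub>3\<close>, and averaging changes it little once \<open>r c / p\<close> is close
  to an integer for the few frequencies \<open>r\<close> with a large Fourier coefficient; Dirichlet's
  simultaneous approximation theorem provides such a \<open>c\<close>.\<close>

definition smooth :: "nat \<Rightarrow> nat \<Rightarrow> nat \<Rightarrow> (nat \<Rightarrow> real) \<Rightarrow> nat \<Rightarrow> real" where
  "smooth N c L f n = (\<Sum>j<L. f ((c * (n + j)) mod N)) / real L"

lemma smooth_eq_dilate: "smooth N c L f = dilate N c (avg_prog N c L f)"
proof
  fix n
  have "((c * n) mod N + c * j) mod N = (c * (n + j)) mod N" for j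
    by (rule mod_eq_iff_int_dvd_diff[THEN iffD2]) (use int_dvd_diff_mod[of N "c * n"] in \<open>simp add: algebra_simps\<close>)
  thus "smooth N c L f n = dilate N c (avg_prog N c L f) n" by (simp add: smooth_def dilate_def avg_prog_def)
qed

lemma smooth_bounded:
  assumes N: "N > 0" and f: "\<And>n. n < N \<Longrightarrow> 0 \<le> f n \<and> f n \<le> 1" and L: "L > 0"
  shows "0 \<le> smooth N c L f n \<and> smooth N c L f n \<le> 1"
proof -
  have "\<forall>j. 0 \<le> f ((c * (n + j)) mod N) \<and> f ((c * (n + j)) mod N) \<le> 1"
    using f N by simp
  hence "0 \<le> (\<Sum>j<L. f ((c * (n + j)) mod N))" by (simp add: sum_nonneg)
  moreover have "(\<Sum>j<L. f ((c * (n + j)) mod N)) \<le> (\<Sum>j<L. 1)"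
    by (rule sum_mono) (use f N in simp)
  ultimately have "0 \<le> (\<Sum>j<L. f ((c * (n + j)) mod N))" "(\<Sum>j<L. f ((c * (n + j)) mod N)) \<le> real L"
    by simp_all
  thus ?thesis using L by (simp add: smooth_def)
qed

lemma sum_smooth:
  assumes N: "N > 0" and cop: "coprime c N" and L: "L > 0"
  shows "(\<Sum>n<N. smooth N c L f n) = (\<Sum>n<N. f n)"
proof -
  have "(\<Sum>n<N. smooth N c L f n) = (\<Sum>n<N. avg_prog N c L f ((c * n) mod N))"
    by (simp add: smooth_eq_dilate dilate_def)
  also have "\<dots> = (\<Sum>m<N. avg_prog N c L f m)" by (rule sum_mult_mod[OF N cop])
  also have "\<dots> = (\<Sum>j<L. \<Sum>m<N. f ((m + c * j) mod N)) / real L"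
    unfolding avg_prog_def by (simp add: sum_divide_distrib[symmetric]) (rule disjI2, rule sum.swap)
  also have "\<dots> = (\<Sum>j<L. \<Sum>m<N. f m) / real L"
    by (simp only: sum.reindex_bij_betw[OF bij_betw_add_mod[OF N]])
  also have "\<dots> = (\<Sum>m<N. f m)" using L by simp
  finally show ?thesis .
qed

lemma Lambda3_smooth:
  assumes N: "N > 0" and cop: "coprime c N"
  shows "Lambda3 N (smooth N c L f) = Lambda3 N (avg_prog N c L f)"
  unfolding smooth_eq_dilate by (rule Lambda3_dilate[OF N cop])

lemma smooth_lipschitz:
  assumes N: "N > 0" and f: "\<And>n. n < N \<Longrightarrow> 0 \<le> f n \<and> f n \<le> 1" and L: "L > 0"
  shows "\<bar>smooth N c L f ((n + 1) mod N) - smooth N c L f n\<bar> \<le> 1 / real L"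
proof -
  define F where "F m = f ((c * m) mod N)" for m
  have per: "smooth N c L f ((n + 1) mod N) = smooth N c L f (n + 1)"
  proof -
    have "(c * ((n + 1) mod N + j)) mod N = (c * (n + 1 + j)) mod N" for j
    proof (rule mod_eq_iff_int_dvd_diff[THEN iffD2])
      have "int N dvd int c * (int ((n + 1) mod N) - int (n + 1))"
        using int_dvd_diff_mod[of N "n+1"] by simp
      thus "int N dvd int (c * ((n + 1) mod N + j)) - int (c * (n + 1 + j))" by (simp add: algebra_simps)
    qed
    thus ?thesis by (simp add: smooth_def)
  qed
  have "smooth N c L f (n + 1) - smooth N c L f n = (\<Sum>j<L. F (n + Suc j) - F (n + j)) / real L"
    by (simp add: smooth_def F_def sum_subtractf diff_divide_distrib)
  also have "(\<Sum>j<L. F (n + Suc j) - F (n + j)) = F (n + L) - F (n + 0)"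
    using sum_lessThan_telescope[of "\<lambda>j. F (n + j)" L] by simp
  finally have eq: "smooth N c L f (n + 1) - smooth N c L f n = (F (n + L) - F n) / real L" by simp
  have Fb: "0 \<le> F m \<and> F m \<le> 1" for m using f N by (simp add: F_def)
  have "\<bar>F (n + L) - F n\<bar> \<le> 1" using Fb[of "n + L"] Fb[of n] by (simp add: abs_le_iff)
  have "\<bar>smooth N c L f ((n + 1) mod N) - smooth N c L f n\<bar> = \<bar>F (n + L) - F n\<bar> / real L"
    unfolding per eq by (simp add: abs_divide)
  also have "\<dots> \<le> 1 / real L"
    by (rule divide_right_mono[OF \<open>\<bar>F (n + L) - F n\<bar> \<le> 1\<close>]) simp
  finally show ?thesis .
qed

lemma exists_dilation_approximating_large_fourier:
  assumes p: "prime p" "p > 2" and M: "M > 0" and f: "\<And>n. n < p \<Longrightarrow> 0 \<le> f n \<and> f n \<le> 1"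
    and \<delta>: "\<delta> > 0" and pM: "M ^ nat \<lfloor>1 / \<delta>\<^sup>2\<rfloor> < p"
  shows "\<exists>c. coprime c p \<and> (\<forall>r<p. \<delta> \<le> norm (fourier p f (-2 * int r)) \<longrightarrow>
      (\<exists>k::int. \<bar>real r * real c / real p - real_of_int k\<bar> \<le> 1 / real M))"
proof -
  define R where "R = {r. r < p \<and> \<delta> \<le> norm (fourier p f (-2 * int r))}"
  define xs where "xs = sorted_list_of_set R"
  have p0: "p > 0" and "coprime (-2) (int p)"
    using p prime_odd_nat[OF p(1)] by (auto simp: coprime_commute)
  then have "real (card R) * \<delta>\<^sup>2 \<le> 1"
    unfolding R_def by (rule card_large_fourier_le[OF _ _ f \<delta>])
  then have "int (card R) \<le> \<lfloor>1 / \<delta>\<^sup>2\<rfloor>"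
    using \<delta> by (simp add: le_floor_iff field_simps)
  then have "M ^ card R \<le> M ^ nat \<lfloor>1 / \<delta>\<^sup>2\<rfloor>"
    using M by (intro power_increasing) auto
  obtain q :: int and k :: "nat \<Rightarrow> int" where q: "0 < q" "q \<le> int (M ^ card R)"
    and k: "\<And>i. i < card R \<Longrightarrow> \<bar>of_int q * (real (xs ! i) / real p) - of_int (k i)\<bar> < 1 / M"
    using Dirichlet_approx_simult[OF M, where \<theta> = "\<lambda>i. real (xs ! i) / real p" and n = "card R"] by blast
  have "nat q < p" and "0 < nat q"
    using q pM \<open>M ^ card R \<le> _\<close> by linarith+
  then have "\<not> p dvd nat q"
    by (auto dest: dvd_imp_le)
  then have "coprime (nat q) p"
    using prime_imp_coprime[OF p(1)] coprime_commute by blast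
  moreover have "\<exists>k::int. \<bar>real r * real (nat q) / real p - real_of_int k\<bar> \<le> 1 / real M"
    if "r < p" "\<delta> \<le> norm (fourier p f (-2 * int r))" for r
  proof -
    have "r \<in> set xs"
      using that by (simp add: xs_def R_def)
    then obtain i where "i < card R" "xs ! i = r"
      by (auto simp: in_set_conv_nth xs_def)
    then show ?thesis
      using k[of i] q(1) by (intro exI[of _ "k i"]) (simp add: mult.commute)
  qed
  ultimately show ?thesis
    by blast
qed

lemma eventually_exists_lipschitz_Lambda3_le:
  assumes \<epsilon>: "\<epsilon> > 0"
  shows "\<forall>\<^sub>F p in sequentially. prime p \<longrightarrow> (\<forall>f. (\<forall>n<p. 0 \<le> f n \<and> f n \<le> 1) \<longrightarrow>
    (\<exists>g. (\<forall>n. 0 \<le> g n \<and> g n \<le> 1) \<and> (\<Sum>n<p. g n) = (\<Sum>n<p. f n) \<and>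
      Lambda3 p g \<le> Lambda3 p f + \<epsilon> \<and> (\<forall>n. \<bar>g ((n + 1) mod p) - g n\<bar> \<le> \<epsilon>)))"
proof -
  define \<delta> where "\<delta> = \<epsilon> / 4"
  define L where "L = nat \<lceil>1 / \<epsilon>\<rceil> + 1"
  define M where "M = nat \<lceil>16 * pi * real L / \<epsilon>\<rceil> + 1"
  have \<delta>: "\<delta> > 0"
    using \<epsilon> by (simp add: \<delta>_def)
  have L: "L > 0" and M: "M > 0"
    by (simp_all add: L_def M_def)
  have "real L > 1 / \<epsilon>"
    unfolding L_def by linarith
  then have L_eps: "1 / real L \<le> \<epsilon>"
    using \<epsilon> L by (simp add: field_simps)
  have "real M > 16 * pi * real L / \<epsilon>"
    unfolding M_def by linarith
  then have M_eps: "2 * \<delta> + 8 * pi * real L * (1 / real M) \<le> \<epsilon>"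
    using \<epsilon> M by (simp add: \<delta>_def field_simps)
  have "\<forall>\<^sub>F p in sequentially. M ^ nat \<lfloor>1 / \<delta>\<^sup>2\<rfloor> + 3 \<le> p"
    by (rule eventually_ge_at_top)
  then show ?thesis
  proof (rule eventually_mono, intro impI allI)
    fix p and f :: "nat \<Rightarrow> real"
    assume p_large: "M ^ nat \<lfloor>1 / \<delta>\<^sup>2\<rfloor> + 3 \<le> p" and p: "prime p"
      and "\<forall>n<p. 0 \<le> f n \<and> f n \<le> 1"
    then have f: "\<And>n. n < p \<Longrightarrow> 0 \<le> f n \<and> f n \<le> 1" and p0: "p > 0"
      by auto
    obtain c where c: "coprime c p" and approx: "\<And>r. r < p \<Longrightarrow> \<delta> \<le> norm (fourier p f (-2 * int r)) \<Longrightarrow>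
        \<exists>k::int. \<bar>real r * real c / real p - real_of_int k\<bar> \<le> 1 / real M"
      using exists_dilation_approximating_large_fourier[where f = f, OF p _ M f \<delta>] p_large by auto
    have "Lambda3 p (avg_prog p c L f) \<le> Lambda3 p f + (2 * \<delta> + 8 * pi * real L * (1 / real M))"
      using \<delta> by (intro Lambda3_avg_prog_le[where f = f, OF p0 f] norm_fourier_multiplier_error_le[where f = f, OF p0 L f]
        approx) simp_all
    then have "Lambda3 p (smooth p c L f) \<le> Lambda3 p f + \<epsilon>"
      using M_eps Lambda3_smooth[OF p0 c] by simp
    moreover have "\<bar>smooth p c L f ((n + 1) mod p) - smooth p c L f n\<bar> \<le> \<epsilon>" for n
      using smooth_lipschitz[where f = f and c = c and n = n, OF p0 f L] L_eps by linarith
    ultimately show "\<exists>g. (\<forall>n. 0 \<le> g n \<and> g n \<le> 1) \<and> (\<Sum>n<p. g n) = (\<Sum>n<p. f n) \<and>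
        Lambda3 p g \<le> Lambda3 p f + \<epsilon> \<and> (\<forall>n. \<bar>g ((n + 1) mod p) - g n\<bar> \<le> \<epsilon>)"
      using smooth_bounded[where f = f and c = c, OF p0 f L] sum_smooth[where f = f, OF p0 c L] by blast
  qed
qed

section \<open>Rescaling to a larger modulus\<close>

lemma Lambda3_nonneg:
  assumes N: "N > 0" and f: "\<And>n. n < N \<Longrightarrow> 0 \<le> f n \<and> f n \<le> 1"
  shows "0 \<le> Lambda3 N f"
proof -
  have "0 \<le> f n * f ((n + d) mod N) * f ((n + 2 * d) mod N)" if "n < N" for n d
    using f[OF that] f[of "(n + d) mod N"] f[of "(n + 2 * d) mod N"] N by simp
  then show ?thesis
    unfolding Lambda3_def by (intro divide_nonneg_nonneg sum_nonneg) auto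
qed

lemma Lambda3_le_1:
  assumes N: "N > 0" and f: "\<And>n. n < N \<Longrightarrow> 0 \<le> f n \<and> f n \<le> 1"
  shows "Lambda3 N f \<le> 1"
proof -
  have "f n * f ((n + d) mod N) * f ((n + 2 * d) mod N) \<le> 1" if "n < N" for n d
    using f[OF that] f[of "(n + d) mod N"] f[of "(n + 2 * d) mod N"] N by (simp add: mult_le_one)
  then have "(\<Sum>n<N. \<Sum>d<N. f n * f ((n + d) mod N) * f ((n + 2 * d) mod N)) \<le> (\<Sum>n<N. \<Sum>d<N. 1)"
    by (intro sum_mono) simp
  also have "\<dots> = (real N)\<^sup>2"
    by (simp add: power2_eq_square)
  finally show ?thesis
    using N by (simp add: Lambda3_def)
qed

lemma prod3_le_plus_abs_diff:
  fixes a b c a' b' c' :: real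
  assumes "0 \<le> a" "a \<le> 1" "0 \<le> b" "b \<le> 1" "0 \<le> c" "c \<le> 1"
    "0 \<le> a'" "a' \<le> 1" "0 \<le> b'" "b' \<le> 1" "0 \<le> c'" "c' \<le> 1"
  shows "a * b * c \<le> a' * b' * c' + \<bar>a - a'\<bar> + \<bar>b - b'\<bar> + \<bar>c - c'\<bar>"
proof -
  have le_abs: "x * t \<le> \<bar>x\<bar>" if "0 \<le> t" "t \<le> 1" for x t :: real
    using that mult_right_mono[of x "\<bar>x\<bar>" t] mult_left_le[of t "\<bar>x\<bar>"] abs_ge_self[of x] by linarith
  have "a * b * c - a' * b' * c' = (a - a') * (b * c) + (b - b') * (a' * c) + (c - c') * (a' * b')"
    by (simp add: algebra_simps)
  also have "\<dots> \<le> \<bar>a - a'\<bar> + \<bar>b - b'\<bar> + \<bar>c - c'\<bar>"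
    using assms by (intro add_mono le_abs) (auto intro: mult_le_one)
  finally show ?thesis by simp
qed
lemma Lambda3_le_of_abs_diff_le:
  assumes N: "N > 0" and f: "\<And>n. n < N \<Longrightarrow> 0 \<le> f n \<and> f n \<le> 1"
    and g: "\<And>n. n < N \<Longrightarrow> 0 \<le> g n \<and> g n \<le> 1" and close: "\<And>n. n < N \<Longrightarrow> \<bar>g n - f n\<bar> \<le> \<eta>"
  shows "Lambda3 N g \<le> Lambda3 N f + 3 * \<eta>"
proof -
  have "(\<Sum>n<N. \<Sum>d<N. g n * g ((n + d) mod N) * g ((n + 2 * d) mod N)) \<le>
      (\<Sum>n<N. \<Sum>d<N. f n * f ((n + d) mod N) * f ((n + 2 * d) mod N) + 3 * \<eta>)"
  proof (intro sum_mono)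
    fix n d assume "n \<in> {..<N}" "d \<in> {..<N}"
    then have i: "n < N" "(n + d) mod N < N" "(n + 2 * d) mod N < N"
      using N by auto
    have "g n * g ((n + d) mod N) * g ((n + 2 * d) mod N) \<le>
        f n * f ((n + d) mod N) * f ((n + 2 * d) mod N) + \<bar>g n - f n\<bar>
        + \<bar>g ((n + d) mod N) - f ((n + d) mod N)\<bar> + \<bar>g ((n + 2 * d) mod N) - f ((n + 2 * d) mod N)\<bar>"
      using f[OF i(1)] f[OF i(2)] f[OF i(3)] g[OF i(1)] g[OF i(2)] g[OF i(3)]
      by (intro prod3_le_plus_abs_diff) auto
    then show "g n * g ((n + d) mod N) * g ((n + 2 * d) mod N) \<le>
        f n * f ((n + d) mod N) * f ((n + 2 * d) mod N) + 3 * \<eta>"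
      using close[OF i(1)] close[OF i(2)] close[OF i(3)] by linarith
  qed
  also have "\<dots> = (\<Sum>n<N. \<Sum>d<N. f n * f ((n + d) mod N) * f ((n + 2 * d) mod N)) + (real N)\<^sup>2 * (3 * \<eta>)"
    by (simp add: sum.distrib power2_eq_square)
  finally have "Lambda3 N g \<le>
      ((\<Sum>n<N. \<Sum>d<N. f n * f ((n + d) mod N) * f ((n + 2 * d) mod N)) + (real N)\<^sup>2 * (3 * \<eta>)) / (real N)\<^sup>2"
    unfolding Lambda3_def by (rule divide_right_mono) simp
  also have "\<dots> = Lambda3 N f + 3 * \<eta>"
    using N by (simp add: Lambda3_def add_divide_distrib)
  finally show ?thesis .
qed

text \<open>Both \<open>\<int>/p\<close> and \<open>\<int>/q\<close> are regarded as discretisations of the same circle.\<close>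

definition rescale :: "nat \<Rightarrow> nat \<Rightarrow> (nat \<Rightarrow> real) \<Rightarrow> nat \<Rightarrow> real" where
  "rescale p q g m = g (m * p div q)"

lemma mod_mult_div_eq:
  assumes q: "q > 0" and p: "p > 0"
  shows "(s mod q) * p div q = (s * p div q) mod (p::nat)"
proof -
  have "s * p = (s mod q) * p + ((s div q) * p) * q"
    by (metis div_mult_mod_eq add.commute mult.commute mult.left_commute distrib_right)
  hence "s * p div q = (s div q) * p + (s mod q) * p div q" using q by simp
  moreover have "(s mod q) * p div q < p"
  proof -
    have "(s mod q) * p < q * p" using q p by simp
    thus ?thesis by (simp add: div_less_iff_less_mult q mult.commute)
  qed
  ultimately show ?thesis by simp
qed

lemma div_add_carry:
  assumes q: "(q::nat) > 0"
  shows "\<exists>e\<le>1. (a + b) div q = a div q + b div q + e"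
proof -
  have "(a mod q + b mod q) div q \<le> 1"
  proof -
    have "a mod q < q" "b mod q < q" using q by simp_all
    hence "a mod q + b mod q < 2 * q" by linarith
    hence "(a mod q + b mod q) div q < 2" by (simp add: div_less_iff_less_mult q)
    thus ?thesis by simp
  qed
  thus ?thesis using div_add1_eq[of a b q] by blast
qed

lemma add_mod_mult_div_eq:
  assumes q: "q > 0" and p: "p > 0"
  shows "\<exists>e\<le>1. ((m + d) mod q) * p div q = (m * p div q + d * p div q + e) mod (p::nat)"
proof -
  obtain e where e: "e \<le> 1" "(m * p + d * p) div q = m * p div q + d * p div q + e"
    using div_add_carry[OF q] by blast
  have "((m + d) mod q) * p div q = ((m + d) * p div q) mod p" by (rule mod_mult_div_eq[OF q p])
  also have "(m + d) * p = m * p + d * p" by (simp add: distrib_right)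
  finally show ?thesis using e by auto
qed

lemma add2_mod_mult_div_eq:
  assumes q: "q > 0" and p: "p > 0"
  shows "\<exists>e\<le>2. ((m + 2 * d) mod q) * p div q = (m * p div q + 2 * (d * p div q) + e) mod (p::nat)"
proof -
  obtain e1 where e1: "e1 \<le> 1" "(m * p + (d * p + d * p)) div q = m * p div q + (d * p + d * p) div q + e1"
    using div_add_carry[OF q] by blast
  obtain e2 where e2: "e2 \<le> 1" "(d * p + d * p) div q = d * p div q + d * p div q + e2"
    using div_add_carry[OF q] by blast
  have "((m + 2 * d) mod q) * p div q = ((m + 2 * d) * p div q) mod p"
    by (rule mod_mult_div_eq[OF q p])
  also have "(m + 2 * d) * p = m * p + (d * p + d * p)" by (simp add: algebra_simps)
  finally have "((m + 2 * d) mod q) * p div q = (m * p div q + (d * p div q + d * p div q + e2) + e1) mod p"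
    using e1 e2 by simp
  also have "m * p div q + (d * p div q + d * p div q + e2) + e1 = m * p div q + 2 * (d * p div q) + (e1 + e2)"
    by simp
  finally have "((m + 2 * d) mod q) * p div q = (m * p div q + 2 * (d * p div q) + (e1 + e2)) mod p" .
  thus ?thesis using e1 e2 by (intro exI[of _ "e1 + e2"]) simp
qed

lemma abs_diff_le_of_cyclic_lipschitz:
  assumes lip: "\<And>n. \<bar>g ((n + 1) mod p) - g n\<bar> \<le> (lam::real)"
  shows "\<bar>g ((a + e) mod p) - g (a mod p)\<bar> \<le> real e * lam"
proof (induction e)
  case 0 thus ?case by simp
next
  case (Suc e)
  have "g ((a + Suc e) mod p) = g (((a + e) mod p + 1) mod p)" by (simp add: mod_Suc_eq)
  hence "\<bar>g ((a + Suc e) mod p) - g ((a + e) mod p)\<bar> \<le> lam" using lip[of "(a + e) mod p"] by simp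
  thus ?case using Suc by (simp add: algebra_simps)
qed

lemma card_rescale_fiber_le:
  assumes q: "q > 0" and p: "p > 0"
  shows "real (card {m. m < q \<and> m * p div q = y}) \<le> real q / real p + 1"
proof (cases "{m. m < q \<and> m * p div q = y} = {}")
  case True
  have "0 \<le> real q / real p + 1" by simp
  thus ?thesis by (simp only: True card.empty of_nat_0)
next
  case False
  let ?S = "{m. m < q \<and> m * p div q = y}"
  have fin: "finite ?S" by simp
  define m0 where "m0 = Min ?S"
  have m0S: "m0 \<in> ?S" unfolding m0_def using Min_in[OF fin False] .
  define k where "k = nat \<lceil>real q / real p\<rceil>"
  have sub: "?S \<subseteq> {m0..<m0 + k}"
  proof
    fix m assume mS: "m \<in> ?S"
    have "m0 \<le> m" unfolding m0_def using Min_le[OF fin mS] .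
    have "y * q \<le> m0 * p"
    proof -
      have e: "m0 * p div q = y" using m0S by simp
      have "m0 * p div q * q \<le> m0 * p" by (rule div_times_less_eq_dividend)
      thus ?thesis unfolding e .
    qed
    moreover have "m * p < y * q + q"
    proof -
      have e: "m * p div q = y" using mS by simp
      have "m * p = m * p div q * q + m * p mod q" by simp
      moreover have "m * p mod q < q" using q by simp
      ultimately have "m * p < m * p div q * q + q" by linarith
      thus ?thesis unfolding e .
    qed
    moreover have "m0 * p \<le> m * p" using \<open>m0 \<le> m\<close> by simp
    ultimately have "m * p - m0 * p < q" by arith
    hence "(m - m0) * p < q" by (simp add: diff_mult_distrib)
    hence "real (m - m0) * real p < real q" by (metis of_nat_less_iff of_nat_mult)
    hence "real (m - m0) < real q / real p" using p by (simp add: field_simps)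
    hence "real (m - m0) < real k" unfolding k_def by linarith
    hence "m - m0 < k" by simp
    thus "m \<in> {m0..<m0 + k}" using \<open>m0 \<le> m\<close> by simp
  qed
  have "card ?S \<le> k" using card_mono[OF _ sub] by simp
  hence "real (card ?S) \<le> real k" by simp
  also have "real k \<le> real q / real p + 1"
  proof -
    have x0: "0 \<le> real q / real p" by simp
    hence "real k = real_of_int \<lceil>real q / real p\<rceil>" unfolding k_def by simp
    thus ?thesis using ceiling_correct[of "real q / real p"] by linarith
  qed
  finally show ?thesis .
qed

lemma sum_rescale_fibers:
  fixes F :: "nat \<Rightarrow> real"
  assumes q: "q > 0" and p: "p > 0"
  shows "(\<Sum>m<q. F (m * p div q)) = (\<Sum>y<p. real (card {m. m < q \<and> m * p div q = y}) * F y)"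
proof -
  have img: "(\<lambda>m. m * p div q) ` {..<q} \<subseteq> {..<p}"
  proof
    fix z assume "z \<in> (\<lambda>m. m * p div q) ` {..<q}"
    then obtain m where m: "m < q" "z = m * p div q" by auto
    have "m * p < q * p" using m p by simp
    thus "z \<in> {..<p}" using m by (simp add: div_less_iff_less_mult q mult.commute)
  qed
  have "(\<Sum>m<q. F (m * p div q)) = (\<Sum>y<p. \<Sum>m\<in>{m \<in> {..<q}. m * p div q = y}. F (m * p div q))"
    by (rule sum.group[symmetric, OF _ _ img]) auto
  also have "\<dots> = (\<Sum>y<p. real (card {m. m < q \<and> m * p div q = y}) * F y)"
  proof (rule sum.cong[OF refl])
    fix y
    have "(\<Sum>m\<in>{m \<in> {..<q}. m * p div q = y}. F (m * p div q)) = (\<Sum>m\<in>{m \<in> {..<q}. m * p div q = y}. F y)"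
      by (rule sum.cong) auto
    also have "{m \<in> {..<q}. m * p div q = y} = {m. m < q \<and> m * p div q = y}" by auto
    finally show "(\<Sum>m\<in>{m \<in> {..<q}. m * p div q = y}. F (m * p div q)) = real (card {m. m < q \<and> m * p div q = y}) * F y"
      by simp
  qed
  finally show ?thesis .
qed

lemma sum_rescale_le:
  fixes F :: "nat \<Rightarrow> real"
  assumes q: "q > 0" and p: "p > 0" and F: "\<And>y. 0 \<le> F y"
  shows "(\<Sum>m<q. F (m * p div q)) \<le> (real q / real p + 1) * (\<Sum>y<p. F y)"
proof -
  have "(\<Sum>m<q. F (m * p div q)) = (\<Sum>y<p. real (card {m. m < q \<and> m * p div q = y}) * F y)"
    by (rule sum_rescale_fibers[OF q p])
  also have "\<dots> \<le> (\<Sum>y<p. (real q / real p + 1) * F y)"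
    using card_rescale_fiber_le[OF q p] F by (intro sum_mono mult_right_mono) auto
  finally show ?thesis
    by (simp add: sum_distrib_left)
qed

lemma mean_rescale_ge:
  assumes p: "p > 0" and q: "q \<ge> p" and g: "\<And>n. 0 \<le> g n \<and> g n \<le> 1"
  shows "(\<Sum>m<q. rescale p q g m) / real q \<ge> (\<Sum>n<p. g n) / real p - real p / real q"
proof -
  define G where "G = (\<Sum>n<p. g n)"
  have q0: "q > 0"
    using p q by simp
  have "real q - (\<Sum>m<q. rescale p q g m) = (\<Sum>m<q. 1 - g (m * p div q))"
    by (simp add: rescale_def sum_subtractf)
  also have "\<dots> \<le> (real q / real p + 1) * (\<Sum>y<p. 1 - g y)"
    by (rule sum_rescale_le[OF q0 p]) (use g in auto)
  also have "\<dots> = (real q / real p + 1) * (real p - G)"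
    by (simp add: G_def sum_subtractf)
  also have "\<dots> = real q - real q * G / real p + real p - G"
    using p by (simp add: field_simps)
  finally have "real q * G / real p - real p \<le> (\<Sum>m<q. rescale p q g m)"
    using sum_nonneg[of "{..<p}" g] g by (simp add: G_def)
  have "G / real p - real p / real q = (real q * G / real p - real p) / real q"
    using p q0 by (simp add: diff_divide_distrib)
  also have "\<dots> \<le> (\<Sum>m<q. rescale p q g m) / real q"
    using \<open>real q * G / real p - real p \<le> _\<close> by (rule divide_right_mono) simp
  finally show ?thesis
    unfolding G_def .
qed
lemma sum2_rescale_le:
  fixes F :: "nat \<Rightarrow> nat \<Rightarrow> real"
  assumes q: "q > 0" and p: "p > 0" and F: "\<And>a b. 0 \<le> F a b"
  shows "(\<Sum>m<q. \<Sum>d<q. F (m * p div q) (d * p div q)) \<le> (real q / real p + 1)\<^sup>2 * (\<Sum>a<p. \<Sum>b<p. F a b)"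
proof -
  have "(\<Sum>m<q. \<Sum>d<q. F (m * p div q) (d * p div q)) \<le> (\<Sum>m<q. (real q / real p + 1) * (\<Sum>b<p. F (m * p div q) b))"
    by (intro sum_mono sum_rescale_le[OF q p] F)
  also have "\<dots> = (real q / real p + 1) * (\<Sum>m<q. \<Sum>b<p. F (m * p div q) b)"
    by (simp add: sum_distrib_left)
  also have "\<dots> \<le> (real q / real p + 1) * ((real q / real p + 1) * (\<Sum>a<p. \<Sum>b<p. F a b))"
    using F by (intro mult_left_mono sum_rescale_le[OF q p] sum_nonneg) auto
  finally show ?thesis
    by (simp add: power2_eq_square mult.assoc)
qed

lemma rescale_triple_le:
  fixes m d :: nat
  assumes q: "q > 0" and p: "p > 0" and g: "\<And>n. 0 \<le> g n \<and> g n \<le> 1" and lam: "lam \<ge> 0"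
    and lip: "\<And>n. \<bar>g ((n + 1) mod p) - g n\<bar> \<le> lam"
  defines "a \<equiv> m * p div q" and "b \<equiv> d * p div q"
  shows "rescale p q g m * rescale p q g ((m + d) mod q) * rescale p q g ((m + 2 * d) mod q)
    \<le> g a * g ((a + b) mod p) * g ((a + 2 * b) mod p) + 3 * lam"
proof -
  obtain e1 where e1: "e1 \<le> 1" "((m + d) mod q) * p div q = (a + b + e1) mod p"
    using add_mod_mult_div_eq[OF q p] unfolding a_def b_def by blast
  obtain e2 where e2: "e2 \<le> 2" "((m + 2 * d) mod q) * p div q = (a + 2 * b + e2) mod p"
    using add2_mod_mult_div_eq[OF q p] unfolding a_def b_def by blast
  have "\<bar>g ((a + b + e1) mod p) - g ((a + b) mod p)\<bar> \<le> real e1 * lam"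
    by (rule abs_diff_le_of_cyclic_lipschitz[where g = g and p = p and lam = lam, OF lip])
  also have "\<dots> \<le> lam"
    using e1 lam mult_right_mono[of "real e1" 1 lam] by simp
  finally have d1: "\<bar>g ((a + b + e1) mod p) - g ((a + b) mod p)\<bar> \<le> lam" .
  have "\<bar>g ((a + 2 * b + e2) mod p) - g ((a + 2 * b) mod p)\<bar> \<le> real e2 * lam"
    by (rule abs_diff_le_of_cyclic_lipschitz[where g = g and p = p and lam = lam, OF lip])
  also have "\<dots> \<le> 2 * lam"
    using e2 lam mult_right_mono[of "real e2" 2 lam] by simp
  finally have d2: "\<bar>g ((a + 2 * b + e2) mod p) - g ((a + 2 * b) mod p)\<bar> \<le> 2 * lam" .
  have "rescale p q g m * rescale p q g ((m + d) mod q) * rescale p q g ((m + 2 * d) mod q) =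
      g a * g ((a + b + e1) mod p) * g ((a + 2 * b + e2) mod p)"
    unfolding rescale_def e1(2) e2(2) a_def ..
  also have "\<dots> \<le> g a * g ((a + b) mod p) * g ((a + 2 * b) mod p) + \<bar>g a - g a\<bar>
      + \<bar>g ((a + b + e1) mod p) - g ((a + b) mod p)\<bar> + \<bar>g ((a + 2 * b + e2) mod p) - g ((a + 2 * b) mod p)\<bar>"
    using g by (intro prod3_le_plus_abs_diff) auto
  also have "\<dots> \<le> g a * g ((a + b) mod p) * g ((a + 2 * b) mod p) + 3 * lam"
    using d1 d2 by simp
  finally show ?thesis .
qed

lemma Lambda3_rescale_le:
  assumes p: "p > 0" and q: "q \<ge> p" and g: "\<And>n. 0 \<le> g n \<and> g n \<le> 1" and lam: "lam \<ge> 0"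
    and lip: "\<And>n. \<bar>g ((n + 1) mod p) - g n\<bar> \<le> lam"
  shows "Lambda3 q (rescale p q g) \<le> Lambda3 p g + 3 * (real p / real q) + 3 * lam"
proof -
  define t where "t = real p / real q"
  define G where "G a b = g a * g ((a + b) mod p) * g ((a + 2 * b) mod p)" for a b
  have q0: "q > 0"
    using p q by simp
  have t: "0 \<le> t" "t \<le> 1"
    using q q0 by (auto simp: t_def)
  have "(\<Sum>m<q. \<Sum>d<q. rescale p q g m * rescale p q g ((m + d) mod q) * rescale p q g ((m + 2 * d) mod q))
      \<le> (\<Sum>m<q. \<Sum>d<q. G (m * p div q) (d * p div q) + 3 * lam)"
    unfolding G_def by (intro sum_mono rescale_triple_le[where g = g and p = p and q = q and lam = lam, OF q0 p g lam lip])
  also have "\<dots> = (\<Sum>m<q. \<Sum>d<q. G (m * p div q) (d * p div q)) + (real q)\<^sup>2 * (3 * lam)"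
    by (simp add: sum.distrib power2_eq_square)
  also have "\<dots> \<le> (real q / real p + 1)\<^sup>2 * (\<Sum>a<p. \<Sum>b<p. G a b) + (real q)\<^sup>2 * (3 * lam)"
    using g by (intro add_right_mono sum2_rescale_le[OF q0 p]) (simp add: G_def)
  also have "(\<Sum>a<p. \<Sum>b<p. G a b) = (real p)\<^sup>2 * Lambda3 p g"
    using p by (simp add: Lambda3_def G_def)
  finally have "Lambda3 q (rescale p q g) \<le>
      ((real q / real p + 1)\<^sup>2 * ((real p)\<^sup>2 * Lambda3 p g) + (real q)\<^sup>2 * (3 * lam)) / (real q)\<^sup>2"
    unfolding Lambda3_def by (rule divide_right_mono) simp
  also have "\<dots> = (1 + t)\<^sup>2 * Lambda3 p g + 3 * lam"
    using p q0 by (simp add: t_def field_simps power2_eq_square)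
  also have "\<dots> \<le> Lambda3 p g + 3 * t + 3 * lam"
  proof -
    have "0 \<le> Lambda3 p g" "Lambda3 p g \<le> 1"
      using Lambda3_nonneg[OF p] Lambda3_le_1[OF p] g by auto
    then have "(2 * t + t\<^sup>2) * Lambda3 p g \<le> 2 * t + t\<^sup>2"
      using t by (simp add: mult_left_le)
    moreover have "t\<^sup>2 \<le> t"
      using t by (simp add: power2_eq_square mult_left_le)
    ultimately show ?thesis
      by (simp add: power2_eq_square algebra_simps)
  qed
  finally show ?thesis
    by (simp add: t_def)
qed

lemma const_1_in_family:
  assumes "N > 0" "v \<le> 1"
  shows "(\<lambda>_. 1) \<in> family N v"
  using assms by (simp add: family_def expect_def)

lemma Lambda3_eq_1:
  assumes N: "N > 0" and f: "\<And>n. n < N \<Longrightarrow> f n = 1"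
  shows "Lambda3 N f = 1"
proof -
  have "(\<Sum>n<N. \<Sum>d<N. f n * f ((n + d) mod N) * f ((n + 2 * d) mod N)) = (\<Sum>n<N. \<Sum>d<N. 1)"
    using f N by (intro sum.cong refl) simp
  thus ?thesis using N by (simp add: Lambda3_def power2_eq_square)
qed

lemma rho_le_Lambda3:
  assumes N: "N > 0" and f: "f \<in> family N v"
  shows "rho v N \<le> Lambda3 N f"
  unfolding rho_def
proof (rule cInf_lower)
  show "Lambda3 N f \<in> Lambda3 N ` family N v" using f by simp
  show "bdd_below (Lambda3 N ` family N v)"
    by (rule bdd_belowI[of _ 0]) (auto simp: family_def intro: Lambda3_nonneg[OF N])
qed

lemma rho_nonneg:
  assumes N: "N > 0" and v: "v \<le> 1"
  shows "0 \<le> rho v N"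
  unfolding rho_def
proof (rule cInf_greatest)
  show "Lambda3 N ` family N v \<noteq> {}" using const_1_in_family[OF N v] by blast
  fix x assume "x \<in> Lambda3 N ` family N v"
  thus "0 \<le> x" by (auto simp: family_def intro: Lambda3_nonneg[OF N])
qed

lemma rho_le_1:
  assumes N: "N > 0" and v: "v \<le> 1"
  shows "rho v N \<le> 1"
  using rho_le_Lambda3[OF N const_1_in_family[OF N v]] Lambda3_eq_1[OF N, of "\<lambda>_. 1"] by simp

lemma exists_Lambda3_lt_rho_plus:
  assumes N: "N > 0" and v: "v \<le> 1" and e: "e > 0"
  shows "\<exists>f\<in>family N v. Lambda3 N f < rho v N + e"
proof -
  have ne: "Lambda3 N ` family N v \<noteq> {}" using const_1_in_family[OF N v] by blast
  have lt: "Inf (Lambda3 N ` family N v) < rho v N + e" using e by (simp add: rho_def)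
  obtain y where "y \<in> Lambda3 N ` family N v" "y < rho v N + e"
    using cInf_lessD[OF ne lt] by blast
  thus ?thesis by blast
qed

lemma rho_1:
  assumes N: "N > 0"
  shows "rho 1 N = 1"
proof -
  have "\<And>f. f \<in> family N 1 \<Longrightarrow> Lambda3 N f = 1"
  proof -
    fix f assume f: "f \<in> family N 1"
    hence b: "\<And>n. n < N \<Longrightarrow> 0 \<le> f n \<and> f n \<le> 1" and m: "(\<Sum>n<N. f n) / real N \<ge> 1"
      by (auto simp: family_def expect_def)
    have "(\<Sum>n<N. f n) \<ge> real N" using m N by (simp add: field_simps)
    hence "(\<Sum>n<N. 1 - f n) \<le> 0" by (simp add: sum_subtractf)
    moreover have "\<forall>n\<in>{..<N}. 0 \<le> 1 - f n" using b by simp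
    ultimately have "\<forall>n\<in>{..<N}. 1 - f n = 0"
      using sum_nonneg_eq_0_iff[of "{..<N}" "\<lambda>n. 1 - f n"] sum_nonneg[of "{..<N}" "\<lambda>n. 1 - f n"] by auto
    thus "Lambda3 N f = 1" by (intro Lambda3_eq_1[OF N]) auto
  qed
  hence "Lambda3 N ` family N 1 = {1}" using const_1_in_family[OF N, of 1] by auto
  thus ?thesis by (simp add: rho_def)
qed

lemma expect_mix_const:
  assumes "N > 0"
  shows "expect N (\<lambda>m. (1 - \<eta>) * h m + \<eta>) = (1 - \<eta>) * expect N h + \<eta>"
proof -
  have "(\<Sum>m<N. (1 - \<eta>) * h m + \<eta>) = (1 - \<eta>) * (\<Sum>m<N. h m) + real N * \<eta>"
    by (simp add: sum.distrib sum_distrib_left)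
  then show ?thesis
    using assms by (simp add: expect_def field_simps)
qed

lemma mix_const_bounds:
  fixes x \<eta> :: real
  assumes "0 \<le> x" "x \<le> 1" "0 \<le> \<eta>" "\<eta> \<le> 1"
  shows "0 \<le> (1 - \<eta>) * x + \<eta> \<and> (1 - \<eta>) * x + \<eta> \<le> 1"
  using assms mult_left_mono[of x 1 "1 - \<eta>"] by simp

lemma Lambda3_mix_const_le:
  assumes N: "N > 0" and h: "\<And>m. 0 \<le> h m \<and> h m \<le> 1" and \<eta>: "0 \<le> \<eta>" "\<eta> \<le> 1"
  shows "Lambda3 N (\<lambda>m. (1 - \<eta>) * h m + \<eta>) \<le> Lambda3 N h + 3 * \<eta>"
proof (rule Lambda3_le_of_abs_diff_le[OF N])
  fix m
  show "0 \<le> (1 - \<eta>) * h m + \<eta> \<and> (1 - \<eta>) * h m + \<eta> \<le> 1"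
    using h[of m] \<eta> by (intro mix_const_bounds) auto
  have "(1 - \<eta>) * h m + \<eta> - h m = \<eta> * (1 - h m)"
    by (simp add: algebra_simps)
  then show "\<bar>(1 - \<eta>) * h m + \<eta> - h m\<bar> \<le> \<eta>"
    using h[of m] \<eta> mult_left_mono[of "1 - h m" 1 \<eta>] by simp
qed (use h in auto)

lemma eventually_rho_le_Lambda3_plus:
  assumes p: "p > 0" and v: "v < 1" and g: "\<And>n. 0 \<le> g n \<and> g n \<le> 1"
    and lam: "lam \<ge> 0" and lip: "\<And>n. \<bar>g ((n + 1) mod p) - g n\<bar> \<le> lam"
    and mean: "v \<le> (\<Sum>n<p. g n) / real p" and \<epsilon>: "\<epsilon> > 0"
  shows "\<forall>\<^sub>F q in sequentially. rho v q \<le> Lambda3 p g + 3 * lam + \<epsilon>"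
proof -
  define \<eta> where "\<eta> = min (\<epsilon> / 6) 1"
  define \<tau> where "\<tau> = min (\<eta> * (1 - v)) (\<epsilon> / 6)"
  have \<eta>: "0 < \<eta>" "\<eta> \<le> 1" "\<eta> \<le> \<epsilon> / 6"
    using \<epsilon> by (auto simp: \<eta>_def)
  have \<tau>: "0 < \<tau>" "\<tau> \<le> \<eta> * (1 - v)" "\<tau> \<le> \<epsilon> / 6"
    using \<eta> v \<epsilon> by (auto simp: \<tau>_def)
  have "\<forall>\<^sub>F q in sequentially. nat \<lceil>real p / \<tau>\<rceil> + p \<le> q"
    by (rule eventually_ge_at_top)
  then show ?thesis
  proof (rule eventually_mono)
    fix q assume q_large: "nat \<lceil>real p / \<tau>\<rceil> + p \<le> q"
    define t where "t = real p / real q"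
    define h where "h m = (1 - \<eta>) * rescale p q g m + \<eta>" for m
    have q: "q \<ge> p" "q > 0"
      using q_large p by auto
    have "real p / \<tau> \<le> real q"
      using q_large by linarith
    then have t: "0 \<le> t" "t \<le> \<tau>"
      using \<tau> q by (auto simp: t_def field_simps)
    have rescale_bounds: "0 \<le> rescale p q g m \<and> rescale p q g m \<le> 1" for m
      using g by (simp add: rescale_def)
    have "v - t \<le> expect q (rescale p q g)"
      using mean_rescale_ge[where g = g, OF p q(1) g] mean by (simp add: t_def expect_def)
    then have "(1 - \<eta>) * (v - t) + \<eta> \<le> expect q h"
      unfolding h_def expect_mix_const[OF q(2)] using \<eta> by (intro add_right_mono mult_left_mono) auto
    moreover have "(1 - \<eta>) * (v - t) + \<eta> = v + (\<eta> * (1 - v) - t) + \<eta> * t"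
      by (simp add: algebra_simps)
    ultimately have "v \<le> expect q h"
      using t \<tau> mult_nonneg_nonneg[of \<eta> t] \<eta> by linarith
    moreover have "0 \<le> h m \<and> h m \<le> 1" for m
      unfolding h_def using rescale_bounds[of m] \<eta> by (intro mix_const_bounds) auto
    ultimately have "h \<in> family q v"
      by (simp add: family_def)
    then have "rho v q \<le> Lambda3 q h"
      by (rule rho_le_Lambda3[OF q(2)])
    also have "\<dots> \<le> Lambda3 q (rescale p q g) + 3 * \<eta>"
      unfolding h_def using Lambda3_mix_const_le[OF q(2) rescale_bounds] \<eta> by simp
    also have "\<dots> \<le> Lambda3 p g + 3 * t + 3 * lam + 3 * \<eta>"
      using Lambda3_rescale_le[where g = g, OF p q(1) g lam lip] by (simp add: t_def)
    finally show "rho v q \<le> Lambda3 p g + 3 * lam + \<epsilon>"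
      using t \<tau> \<eta> by linarith
  qed
qed

lemma eventually_rho_le_rho_plus:
  assumes v: "v \<le> 1" and \<epsilon>: "\<epsilon> > 0"
  shows "\<forall>\<^sub>F p in sequentially. prime p \<longrightarrow> (\<forall>\<^sub>F q in sequentially. rho v q \<le> rho v p + \<epsilon>)"
proof (cases "v = 1")
  case True
  have "\<forall>\<^sub>F q in sequentially. rho v q \<le> rho v p + \<epsilon>" if "prime p" for p
    using eventually_gt_at_top[of 0] by eventually_elim (use True \<epsilon> that prime_gt_0_nat rho_1 in auto)
  then show ?thesis
    by simp
next
  case False
  with v have v: "v < 1" by simp
  have "\<epsilon> / 12 > 0"
    using \<epsilon> by simp
  from eventually_exists_lipschitz_Lambda3_le[OF this] show ?thesis
  proof (rule eventually_mono, intro impI)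
    fix p :: nat
    assume smoothing: "prime p \<longrightarrow> (\<forall>f. (\<forall>n<p. 0 \<le> f n \<and> f n \<le> 1) \<longrightarrow>
      (\<exists>g. (\<forall>n. 0 \<le> g n \<and> g n \<le> 1) \<and> (\<Sum>n<p. g n) = (\<Sum>n<p. f n) \<and>
        Lambda3 p g \<le> Lambda3 p f + \<epsilon> / 12 \<and> (\<forall>n. \<bar>g ((n + 1) mod p) - g n\<bar> \<le> \<epsilon> / 12)))"
      and "prime p"
    then have p: "p > 0"
      by (simp add: prime_gt_0_nat)
    obtain f where "f \<in> family p v" and f_min: "Lambda3 p f < rho v p + \<epsilon> / 4"
      using exists_Lambda3_lt_rho_plus[OF p, of v "\<epsilon> / 4"] v \<epsilon> by auto
    then have "\<forall>n<p. 0 \<le> f n \<and> f n \<le> 1" and f_mean: "v \<le> (\<Sum>n<p. f n) / real p"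
      by (auto simp: family_def expect_def)
    then obtain g where g: "\<And>n. 0 \<le> g n \<and> g n \<le> 1" and "(\<Sum>n<p. g n) = (\<Sum>n<p. f n)"
      and g_Lambda3: "Lambda3 p g \<le> Lambda3 p f + \<epsilon> / 12"
      and lip: "\<And>n. \<bar>g ((n + 1) mod p) - g n\<bar> \<le> \<epsilon> / 12"
      using smoothing \<open>prime p\<close> by blast
    with f_mean have "v \<le> (\<Sum>n<p. g n) / real p"
      by simp
    with \<epsilon> have "\<forall>\<^sub>F q in sequentially. rho v q \<le> Lambda3 p g + 3 * (\<epsilon> / 12) + \<epsilon> / 4"
      by (intro eventually_rho_le_Lambda3_plus[where g = g, OF p v g _ lip]) auto
    then show "\<forall>\<^sub>F q in sequentially. rho v q \<le> rho v p + \<epsilon>"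
      by eventually_elim (use f_min g_Lambda3 \<epsilon> in linarith)
  qed
qed

lemma tendsto_of_eventually_le_plus:
  fixes a :: "nat \<Rightarrow> real"
  assumes P: "infinite P" and bounded: "\<And>p. p \<in> P \<Longrightarrow> lo \<le> a p \<and> a p \<le> hi"
    and le: "\<And>\<epsilon>. \<epsilon> > 0 \<Longrightarrow> \<forall>\<^sub>F p in sequentially. p \<in> P \<longrightarrow> (\<forall>\<^sub>F q in sequentially. a q \<le> a p + \<epsilon>)"
  shows "\<exists>L. (a \<longlongrightarrow> L) (inf sequentially (principal P))"
proof -
  define S where "S N = {p \<in> P. N \<le> p}" for N
  define m where "m N = Inf (a ` S N)" for N
  have S_ne: "S N \<noteq> {}" for N
    using P by (auto simp: S_def infinite_nat_iff_unbounded_le)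
  have bdd: "bdd_below (a ` S N)" for N
    using bounded by (auto simp: S_def intro!: bdd_belowI[of _ lo])
  have m_le: "m N \<le> a p" if "p \<in> S N" for N p
    unfolding m_def using that bdd by (intro cInf_lower) auto
  have "m N \<le> hi" for N
    using S_ne[of N] m_le[of _ N] bounded by (force simp: S_def)
  then have bdd_m: "bdd_above (range m)"
    by (intro bdd_aboveI[of _ hi]) auto
  define L where "L = Sup (range m)"
  have "\<forall>\<^sub>F q in inf sequentially (principal P). dist (a q) L < e" if e: "e > 0" for e
  proof -
    obtain N1 where N1: "L - e < m N1"
      using less_cSUP_iff[OF _ bdd_m, of "L - e"] e by (auto simp: L_def)
    obtain P0 where P0: "\<And>p. p \<ge> P0 \<Longrightarrow> p \<in> P \<Longrightarrow> (\<forall>\<^sub>F q in sequentially. a q \<le> a p + e / 2)"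
      using le[of "e / 2"] e by (auto simp: eventually_sequentially)
    have "m P0 < L + e / 2"
      using cSUP_upper[OF _ bdd_m, of P0] e by (simp add: L_def)
    then obtain p where p: "p \<in> S P0" "a p < L + e / 2"
      using cInf_lessD[of "a ` S P0"] S_ne by (force simp: m_def)
    then obtain Q where Q: "\<And>q. q \<ge> Q \<Longrightarrow> a q \<le> a p + e / 2"
      using P0[of p] by (auto simp: S_def eventually_sequentially)
    show ?thesis
      unfolding eventually_inf_principal eventually_sequentially
    proof (intro exI allI impI)
      fix q assume "max N1 Q \<le> q" "q \<in> P"
      then have "L - e < a q" "a q < L + e"
        using m_le[of q N1] N1 Q[of q] p(2) by (auto simp: S_def)
      then show "dist (a q) L < e"
        by (simp add: dist_real_def abs_less_iff)
    qed
  qed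
  then show ?thesis
    by (auto simp: tendsto_iff)
qed

theorem theorem1:
  fixes v :: real
  assumes "0 < v" and "v \<le> 1"
  shows "\<exists>L. ((\<lambda>p. rho v p) \<longlongrightarrow> L) (inf sequentially (principal {p. prime p}))"
proof (rule tendsto_of_eventually_le_plus)
  show "infinite {p::nat. prime p}"
    by (rule primes_infinite)
  show "0 \<le> rho v p \<and> rho v p \<le> 1" if "p \<in> {p. prime p}" for p
    using that prime_gt_0_nat rho_nonneg rho_le_1 \<open>v \<le> 1\<close> by auto
  show "\<forall>\<^sub>F p in sequentially. p \<in> {p. prime p} \<longrightarrow> (\<forall>\<^sub>F q in sequentially. rho v q \<le> rho v p + \<epsilon>)"
    if "\<epsilon> > 0" for \<epsilon>
    using eventually_rho_le_rho_plus[OF \<open>v \<le> 1\<close> that] by simp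
qed

end
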